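(* Consider either the filter-based or the feature-based SDL loss $L(\mathbf{W},\mathbf{H},\boldsymbol{\beta},\boldsymbol{\Gamma})$ described in the context, assume (A4), and assume the constraint sets $\mathcal{C}^{\mathrm{dict}}\subseteq\mathbb{R}^{p\times r}$, $\mathcal{C}^{\mathrm{code}}\subseteq\mathbb{R}^{r\times n}$, $\mathcal{C}^{\mathrm{beta}}\subseteq\mathbb{R}^{r\times\kappa}$, $\mathcal{C}^{\mathrm{aux}}\subseteq\mathbb{R}^{q\times\kappa}$ are convex and compact. Write $\boldsymbol{\Theta}=\mathcal{C}^{\mathrm{dict}}\times\mathcal{C}^{\mathrm{code}}\times\mathcal{C}^{\mathrm{beta}}\times\mathcal{C}^{\mathrm{aux}}$, and let $\mathbf{Z}_t=(\mathbf{W}_t,\mathbf{H}_t,\boldsymbol{\beta}_t,\boldsymbol{\Gamma}_t)$ be the iterates of the block coordinate descent with diminishing radius (BCD-DR) with radii $r_t$ satisfying $\sum_{t=1}^\infty r_t=\infty$ and $\sum_{t=1}^\infty r_t^2<\infty$. Then for every initial estimate $\mathbf{Z}_0\in\boldsymbol{\Theta}$ and every $\xi\ge0$: (i) $\mathbf{Z}_t$ converges to the set of stationary points of $L$ over $\boldsymbol{\Theta}$; (ii) for each $T\ge1$, $$\min_{1\le k\le T}\Big[-\inf_{\mathbf{Z}\in\boldsymbol{\Theta}}\Big\langle\nabla L(\mathbf{Z}_k),\frac{\mathbf{Z}-\mathbf{Z}_k}{\|\mathbf{Z}-\mathbf{Z}_k\|_F}\Big\rangle\Big]=O\Big(\Big(\sum_{k=1}^T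 r_k\Big)^{-1}\Big);$$ (iii) if $r_k=1/(\sqrt k\log k)$, then for each $\varepsilon>0$ an $\varepsilon$-stationary point is achieved within $O(\varepsilon^{-1}(\log\varepsilon^{-1})^2)$ iterations.
   Context: Data: $\mathbf{X}_{\mathrm{data}}=[\mathbf{x}_1,\dots,\mathbf{x}_n]\in\mathbb{R}^{p\times n}$, $\mathbf{X}_{\mathrm{aux}}=[\mathbf{x}_1',\dots,\mathbf{x}_n']\in\mathbb{R}^{q\times n}$, labels $y_i\in\{0,\dots,\kappa\}$. Fix a score function $h:\mathbb{R}\to[0,\infty)$; for $\mathbf{a}\in\mathbb{R}^\kappa$, $g_0(\mathbf{a})=1/(1+\sum_{c=1}^\kappa h(a_c))$, $g_j(\mathbf{a})=h(a_j)/(1+\sum_{c}h(a_c))$, and $\ell(y,\mathbf{g}(\mathbf{a}))=-\sum_{j=0}^\kappa\mathbf{1}(y=j)\log g_j(\mathbf{a})$. For $\mathbf{W}\in\mathbb{R}^{p\times r}$, $\mathbf{H}=[\mathbf{h}_1,\dots,\mathbf{h}_n]\in\mathbb{R}^{r\times n}$, $\boldsymbol{\beta}\in\mathbb{R}^{r\times\kappa}$, $\boldsymbol{\Gamma}\in\mathbb{R}^{q\times\kappa}$, the SDL loss is $L=\sum_{i=1}^n\ell(y_i,\mathbf{g}(\mathbf{a}_i))+\xi\|\mathbf{X}_{\mathrm{data}}-\mathbf{W}\mathbf{H}\|_F^2$, where $\mathbf{a}_i=\boldsymbol{\beta}^T\mathbf{W}^T\mathbf{x}_i+\boldsymbol{\Gamma}^T\mathbf{x}_i'$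 (filter-based) or $\mathbf{a}_i=\boldsymbol{\beta}^T\mathbf{h}_i+\boldsymbol{\Gamma}^T\mathbf{x}_i'$ (feature-based). BCD-DR: initialize $(\mathbf{W}_0,\mathbf{H}_0,\boldsymbol{\beta}_0,\boldsymbol{\Gamma}_0)\in\boldsymbol{\Theta}$; for $k\ge1$, $\mathbf{W}_k\in\arg\min\{L(\mathbf{W},\mathbf{H}_{k-1},\boldsymbol{\beta}_{k-1},\boldsymbol{\Gamma}_{k-1}):\mathbf{W}\in\mathcal{C}^{\mathrm{dict}},\|\mathbf{W}-\mathbf{W}_{k-1}\|_F\le r_k\}$, then $\boldsymbol{\beta}_k\in\arg\min\{L(\mathbf{W}_k,\mathbf{H}_{k-1},\boldsymbol{\beta},\boldsymbol{\Gamma}_{k-1}):\boldsymbol{\beta}\in\mathcal{C}^{\mathrm{beta}},\|\boldsymbol{\beta}-\boldsymbol{\beta}_{k-1}\|_F\le r_k\}$, then $\boldsymbol{\Gamma}_k\in\arg\min\{L(\mathbf{W}_k,\mathbf{H}_{k-1},\boldsymbol{\beta}_k,\boldsymbol{\Gamma}):\boldsymbol{\Gamma}\in\mathcal{C}^{\mathrm{aux}},\|\boldsymbol{\Gamma}-\boldsymbol{\Gamma}_{k-1}\|_F\le r_k\}$, then $\mathbf{H}_k\in\arg\min\{L(\mathbf{W}_k,\mathbf{H},\boldsymbol{\beta}_k,\boldsymbol{\Gamma}_k):\mathbf{H}\in\mathcal{C}^{\mathrm{code}},\|\mathbf{H}-\mathbf{H}_{k-1}\|_F\le r_k\}$. A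 point $\mathbf{Z}^*\in\boldsymbol{\Theta}$ is stationary for $L$ over $\boldsymbol{\Theta}$ if $\langle\nabla L(\mathbf{Z}^* ),\mathbf{Z}-\mathbf{Z}^*\rangle\ge0$ for all $\mathbf{Z}\in\boldsymbol{\Theta}$; it is $\varepsilon$-stationary if $-\inf_{\mathbf{Z}\in\boldsymbol{\Theta}}\langle\nabla L(\mathbf{Z}^* ),(\mathbf{Z}-\mathbf{Z}^* )/\|\mathbf{Z}-\mathbf{Z}^*\|_F\rangle\le\sqrt\varepsilon$ (Frobenius norm on the product, summing squares over blocks). (A4): $h$ is twice continuously differentiable, and for some constant $M>0$ there are constants $\gamma_{\max},\alpha^-,\alpha^+>0$ with $\gamma_{\max}=\sup_{\|\mathbf{a}\|<M}\max_s\|\dot{\mathbf{h}}(y_s,\mathbf{a})\|_\infty$, $\alpha^-=\inf_{\|\mathbf{a}\|<M}\min_s\lambda_{\min}(\ddot{\mathbf{H}}(y_s,\mathbf{a}))$, $\alpha^+=\sup_{\|\mathbf{a}\|<M}\max_s\lambda_{\max}(\ddot{\mathbf{H}}(y_s,\mathbf{a}))$, where $\dot h_j(y,\mathbf{a})=\frac{h'(a_j)}{1+\sum_c h(a_c)}-\mathbf{1}(y=j)\frac{h'(a_j)}{h(a_j)}$ and $\ddot{\mathbf{H}}(y,\mathbf{a})_{ij}=\frac{h''(a_j)\mathbf{1}(i=j)}{1+\sum_c h(a_c)}-\frac{h'(a_i)h'(a_j)}{(1+\sum_c h(a_c))^2}-\mathbf{1}(y=i=j)\Big(\frac{h''(a_j)}{h(a_j)}-\frac{h'(a_j)^2}{h(a_j)^2}\Big)$.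 *)

theory Defs
  imports "HOL-Analysis.Analysis" "HOL-Library.Landau_Symbols"
begin

text \<open>Dimensions: data dim p = CARD('p), aux dim q = CARD('q), rank r = CARD('r),
  samples n = CARD('n), number of non-baseline classes kappa = CARD('k).
  A label in {0,...,kappa} is an element of 'k option (None = class 0, Some j = class j).
  Matrices are real^cols^rows, so norm is the Frobenius norm.\<close>

datatype sdl_kind = FilterBased | FeatureBased

definition sdl_g :: "(real \<Rightarrow> real) \<Rightarrow> real^'k \<Rightarrow> 'k option \<Rightarrow> real" where
  "sdl_g h a j = (case j of
      None \<Rightarrow> 1 / (1 + (\<Sum>c\<in>UNIV. h (a $ c)))
    | Some jj \<Rightarrow> h (a $ jj) / (1 + (\<Sum>c\<in>UNIV. h (a $ c))))"

definition sdl_ell :: "(real \<Rightarrow> real) \<Rightarrow> 'k::finite option \<Rightarrow> real^'k \<Rightarrow> real" where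
  "sdl_ell h y a = - (\<Sum>j\<in>UNIV. (if y = j then 1 else 0) * ln (sdl_g h a j))"

type_synonym ('p,'q,'r,'n,'k) sdl_param =
  "(real^'r^'p) \<times> (real^'n^'r) \<times> (real^'k^'r) \<times> (real^'k^'q)"

definition sdl_act ::
  "sdl_kind \<Rightarrow> real^'n^'p \<Rightarrow> real^'n^'q \<Rightarrow> ('p::finite,'q::finite,'r::finite,'n::finite,'k::finite) sdl_param
     \<Rightarrow> 'n \<Rightarrow> real^'k" where
  "sdl_act kind Xd Xa Z i = (case Z of (W, H, \<beta>, \<Gamma>) \<Rightarrow>
     (case kind of
        FilterBased \<Rightarrow> transpose \<beta> *v (transpose W *v column i Xd)
      | FeatureBased \<Rightarrow> transpose \<beta> *v column i H)
     + transpose \<Gamma> *v column i Xa)"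

definition sdl_loss ::
  "(real \<Rightarrow> real) \<Rightarrow> sdl_kind \<Rightarrow> real^'n^'p \<Rightarrow> real^'n^'q \<Rightarrow> ('n \<Rightarrow> 'k option) \<Rightarrow> real
     \<Rightarrow> ('p::finite,'q::finite,'r::finite,'n::finite,'k::finite) sdl_param \<Rightarrow> real" where
  "sdl_loss h kind Xd Xa y \<xi> Z =
     (\<Sum>i\<in>UNIV. sdl_ell h (y i) (sdl_act kind Xd Xa Z i))
     + \<xi> * (norm (Xd - fst Z ** fst (snd Z)))\<^sup>2"

text \<open>Block coordinate descent with diminishing radius; Z : nat \<Rightarrow> parameter is any
  sequence of iterates produced by BCD-DR (any choice of minimizers).\<close>
definition bcd_dr ::
  "(('a::real_normed_vector) \<times> ('b::real_normed_vector) \<times> ('c::real_normed_vector) \<times> ('d::real_normed_vector) \<Rightarrow> real)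
    \<Rightarrow> 'a set \<Rightarrow> 'b set \<Rightarrow> 'c set \<Rightarrow> 'd set \<Rightarrow> (nat \<Rightarrow> real) \<Rightarrow> (nat \<Rightarrow> 'a \<times> 'b \<times> 'c \<times> 'd) \<Rightarrow> bool" where
  "bcd_dr L CW CH Cb CG r Z \<longleftrightarrow>
     Z 0 \<in> CW \<times> CH \<times> Cb \<times> CG \<and>
     (\<forall>k\<ge>1. case Z (k - 1) of (W0, H0, b0, G0) \<Rightarrow> (case Z k of (W1, H1, b1, G1) \<Rightarrow>
        is_arg_min (\<lambda>W. L (W, H0, b0, G0)) (\<lambda>W. W \<in> CW \<and> dist W W0 \<le> r k) W1 \<and>
        is_arg_min (\<lambda>b. L (W1, H0, b, G0)) (\<lambda>b. b \<in> Cb \<and> dist b b0 \<le> r k) b1 \<and>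
        is_arg_min (\<lambda>G. L (W1, H0, b1, G)) (\<lambda>G. G \<in> CG \<and> dist G G0 \<le> r k) G1 \<and>
        is_arg_min (\<lambda>H. L (W1, H, b1, G1)) (\<lambda>H. H \<in> CH \<and> dist H H0 \<le> r k) H1))"

definition grad :: "('a::real_inner \<Rightarrow> real) \<Rightarrow> 'a \<Rightarrow> 'a" where
  "grad f x = (THE G. (f has_derivative (\<lambda>v. inner G v)) (at x))"

definition stationary_on :: "('a::real_inner \<Rightarrow> real) \<Rightarrow> 'a set \<Rightarrow> 'a \<Rightarrow> bool" where
  "stationary_on L \<Theta> Z \<longleftrightarrow> Z \<in> \<Theta> \<and> (\<forall>Z'\<in>\<Theta>. inner (grad L Z) (Z' - Z) \<ge> 0)"

text \<open>Stationarity measure  - inf_{Z' in Theta} <grad L(Z), (Z'-Z)/||Z'-Z||>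
  (the term Z' = Z contributes 0, by the convention x/0 = 0).\<close>
definition stat_measure :: "('a::real_inner \<Rightarrow> real) \<Rightarrow> 'a set \<Rightarrow> 'a \<Rightarrow> real" where
  "stat_measure L \<Theta> Z = - (INF Z'\<in>\<Theta>. inner (grad L Z) ((1 / norm (Z' - Z)) *\<^sub>R (Z' - Z)))"

definition eps_stationary :: "('a::real_inner \<Rightarrow> real) \<Rightarrow> 'a set \<Rightarrow> real \<Rightarrow> 'a \<Rightarrow> bool" where
  "eps_stationary L \<Theta> \<epsilon> Z \<longleftrightarrow> Z \<in> \<Theta> \<and> stat_measure L \<Theta> Z \<le> sqrt \<epsilon>"

definition sdl_hdot :: "(real \<Rightarrow> real) \<Rightarrow> (real \<Rightarrow> real) \<Rightarrow> 'k::finite option \<Rightarrow> real^'k \<Rightarrow> real^'k" where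
  "sdl_hdot h h' y a = (\<chi> j. h' (a $ j) / (1 + (\<Sum>c\<in>UNIV. h (a $ c)))
        - (if y = Some j then h' (a $ j) / h (a $ j) else 0))"

definition sdl_Hddot ::
  "(real \<Rightarrow> real) \<Rightarrow> (real \<Rightarrow> real) \<Rightarrow> (real \<Rightarrow> real) \<Rightarrow> 'k::finite option \<Rightarrow> real^'k \<Rightarrow> real^'k^'k" where
  "sdl_Hddot h h' h'' y a = (\<chi> i j.
        (if i = j then h'' (a $ j) / (1 + (\<Sum>c\<in>UNIV. h (a $ c))) else 0)
      - h' (a $ i) * h' (a $ j) / (1 + (\<Sum>c\<in>UNIV. h (a $ c)))\<^sup>2
      - (if y = Some i \<and> i = j then h'' (a $ j) / h (a $ j) - (h' (a $ j))\<^sup>2 / (h (a $ j))\<^sup>2 else 0))"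

definition real_eigenvalues :: "real^'k^'k \<Rightarrow> real set" where
  "real_eigenvalues A = {c. \<exists>v. v \<noteq> 0 \<and> A *v v = c *\<^sub>R v}"

definition lambda_min :: "real^'k^'k \<Rightarrow> real" where
  "lambda_min A = Min (real_eigenvalues A)"

definition lambda_max :: "real^'k^'k \<Rightarrow> real" where
  "lambda_max A = Max (real_eigenvalues A)"

definition assm_A4 ::
  "(real \<Rightarrow> real) \<Rightarrow> (real \<Rightarrow> real) \<Rightarrow> (real \<Rightarrow> real) \<Rightarrow> ('n \<Rightarrow> 'k::finite option) \<Rightarrow> bool" where
  "assm_A4 h h' h'' y \<longleftrightarrow>
     (\<forall>x. (h has_real_derivative h' x) (at x)) \<and>
     (\<forall>x. (h' has_real_derivative h'' x) (at x)) \<and> continuous_on UNIV h'' \<and>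
     (\<exists>M>0.
        bdd_above {infnorm (sdl_hdot h h' (y s) a) | s a. norm a < M} \<and>
        Sup {infnorm (sdl_hdot h h' (y s) a) | s a. norm a < M} > 0 \<and>
        bdd_below {lambda_min (sdl_Hddot h h' h'' (y s) a) | s a. norm a < M} \<and>
        Inf {lambda_min (sdl_Hddot h h' h'' (y s) a) | s a. norm a < M} > 0 \<and>
        bdd_above {lambda_max (sdl_Hddot h h' h'' (y s) a) | s a. norm a < M} \<and>
        Sup {lambda_max (sdl_Hddot h h' h'' (y s) a) | s a. norm a < M} > 0)"

end

theory Submission
  imports Defs "HOL-Real_Asymp.Real_Asymp"
begin

(*
  On the compact parameter set the SDL loss L is bounded and has a Lipschitz gradient, because it
  is assembled from C^2 scalar functions by sums, products, bilinear maps and compositions.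
  In every block update, first-order optimality of the minimiser over a ball of radius r_k,
  combined with the descent lemma, bounds the stationarity measure m of the new iterate:
    r_k * m(Z_k) <= L(Z_(k-1)) - L(Z_k) + 16 K r_k^2.
  Telescoping and summability of r_k^2 give sum_k r_k m(Z_k) < infinity. This yields (ii) at once,
  and (iii) because sum_(k<=T) 1/(sqrt k log k) >= sqrt T / (2 log T).
  For (i), suppose a limit point l is not stationary, so m >= c > 0 near l. Iterates move by at
  most 4 r_k with r_k -> 0; once the tail of the series is small, an iterate close to l can leave
  the neighbourhood only by spending r-mass that the series cannot pay for, so it stays there for
  ever, and then sum_k r_k m(Z_k) >= c sum_k r_k = infinity.
*)

section \<open>Smooth functions\<close>

(* Boundedness of f and D is built in so that the class is closed under products and composition;
   the Lipschitz bound on D is what the descent lemma needs. *)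
definition smooth_deriv_on ::
  "real \<Rightarrow> 'a::real_normed_vector set \<Rightarrow> ('a \<Rightarrow> 'b::real_normed_vector) \<Rightarrow> ('a \<Rightarrow> 'a \<Rightarrow> 'b) \<Rightarrow> bool"
  where "smooth_deriv_on K S f D \<longleftrightarrow> 0 \<le> K \<and>
    (\<forall>x\<in>S. (f has_derivative D x) (at x) \<and> norm (f x) \<le> K \<and> (\<forall>v. norm (D x v) \<le> K * norm v) \<and>
      (\<forall>y\<in>S. norm (f x - f y) \<le> K * norm (x - y) \<and>
        (\<forall>v. norm (D x v - D y v) \<le> K * norm (x - y) * norm v)))"

definition smooth_on :: "'a::real_normed_vector set \<Rightarrow> ('a \<Rightarrow> 'b::real_normed_vector) \<Rightarrow> bool"
  where "smooth_on S f \<longleftrightarrow> (\<exists>K D. smooth_deriv_on K S f D)"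

lemma smooth_deriv_onI:
  assumes "0 \<le> K"
    and "\<And>x. x \<in> S \<Longrightarrow> (f has_derivative D x) (at x)"
    and "\<And>x. x \<in> S \<Longrightarrow> norm (f x) \<le> K"
    and "\<And>x v. x \<in> S \<Longrightarrow> norm (D x v) \<le> K * norm v"
    and "\<And>x y. x \<in> S \<Longrightarrow> y \<in> S \<Longrightarrow> norm (f x - f y) \<le> K * norm (x - y)"
    and "\<And>x y v. x \<in> S \<Longrightarrow> y \<in> S \<Longrightarrow> norm (D x v - D y v) \<le> K * norm (x - y) * norm v"
  shows "smooth_deriv_on K S f D"
  using assms unfolding smooth_deriv_on_def by blast

lemma smooth_deriv_on_nonneg: "smooth_deriv_on K S f D \<Longrightarrow> 0 \<le> K"
  by (simp add: smooth_deriv_on_def)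

lemma smooth_deriv_on_has_derivative:
  "smooth_deriv_on K S f D \<Longrightarrow> x \<in> S \<Longrightarrow> (f has_derivative D x) (at x)"
  by (simp add: smooth_deriv_on_def)

lemma smooth_deriv_on_bound: "smooth_deriv_on K S f D \<Longrightarrow> x \<in> S \<Longrightarrow> norm (f x) \<le> K"
  by (simp add: smooth_deriv_on_def)

lemma smooth_deriv_on_deriv_bound:
  "smooth_deriv_on K S f D \<Longrightarrow> x \<in> S \<Longrightarrow> norm (D x v) \<le> K * norm v"
  by (simp add: smooth_deriv_on_def)

lemma smooth_deriv_on_lipschitz:
  "smooth_deriv_on K S f D \<Longrightarrow> x \<in> S \<Longrightarrow> y \<in> S \<Longrightarrow> norm (f x - f y) \<le> K * norm (x - y)"
  by (simp add: smooth_deriv_on_def)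

lemma smooth_deriv_on_deriv_lipschitz:
  "smooth_deriv_on K S f D \<Longrightarrow> x \<in> S \<Longrightarrow> y \<in> S \<Longrightarrow>
    norm (D x v - D y v) \<le> K * norm (x - y) * norm v"
  by (simp add: smooth_deriv_on_def)

lemma smooth_deriv_on_subset: "smooth_deriv_on K S f D \<Longrightarrow> T \<subseteq> S \<Longrightarrow> smooth_deriv_on K T f D"
  unfolding smooth_deriv_on_def by blast

lemma smooth_on_bounded: "smooth_on S f \<Longrightarrow> bounded (f ` S)"
  unfolding smooth_on_def bounded_iff by (blast dest: smooth_deriv_on_bound)

lemma smooth_on_const: "smooth_on S (\<lambda>x. c)"
proof -
  have "smooth_deriv_on (norm c) S (\<lambda>x. c) (\<lambda>x v. 0)" by (rule smooth_deriv_onI) auto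
  then show ?thesis unfolding smooth_on_def by blast
qed

lemma smooth_on_linear:
  assumes f: "bounded_linear f" and S: "bounded S"
  shows "smooth_on S f"
proof -
  obtain K where K: "K > 0" "\<And>x. norm (f x) \<le> norm x * K"
    using bounded_linear.pos_bounded[OF f] by blast
  obtain B where B: "B > 0" "\<And>x. x \<in> S \<Longrightarrow> norm x \<le> B"
    using S unfolding bounded_pos by blast
  have fv: "norm (f v) \<le> K * (B + 1) * norm v" for v
  proof -
    have "norm (f v) \<le> K * norm v" using K(2)[of v] by (simp add: mult.commute)
    also have "\<dots> \<le> K * (B + 1) * norm v" using K B by (intro mult_right_mono) auto
    finally show ?thesis .
  qed
  have "smooth_deriv_on (K * (B + 1)) S f (\<lambda>x. f)"
  proof (rule smooth_deriv_onI)
    show "0 \<le> K * (B + 1)" using K B by simp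
    show "(f has_derivative f) (at x)" for x using f by (rule bounded_linear_imp_has_derivative)
    show "norm (f x) \<le> K * (B + 1)" if "x \<in> S" for x
    proof -
      have "norm (f x) \<le> K * norm x" using K(2)[of x] by (simp add: mult.commute)
      also have "\<dots> \<le> K * (B + 1)" using K B(2)[OF that] by (intro mult_left_mono) auto
      finally show ?thesis .
    qed
    show "norm (f v) \<le> K * (B + 1) * norm v" for v by (rule fv)
    show "norm (f x - f y) \<le> K * (B + 1) * norm (x - y)" for x y
      using fv[of "x - y"] by (simp add: linear_diff bounded_linear.linear[OF f])
  qed (use K B in simp)
  then show ?thesis unfolding smooth_on_def by blast
qed

lemma smooth_on_add:
  assumes "smooth_on S f" "smooth_on S g"
  shows "smooth_on S (\<lambda>x. f x + g x)"
proof -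
  obtain A Df B Dg where f: "smooth_deriv_on A S f Df" and g: "smooth_deriv_on B S g Dg"
    using assms unfolding smooth_on_def by blast
  note f' = smooth_deriv_on_bound[OF f] smooth_deriv_on_deriv_bound[OF f]
    smooth_deriv_on_lipschitz[OF f] smooth_deriv_on_deriv_lipschitz[OF f]
  note g' = smooth_deriv_on_bound[OF g] smooth_deriv_on_deriv_bound[OF g]
    smooth_deriv_on_lipschitz[OF g] smooth_deriv_on_deriv_lipschitz[OF g]
  have "smooth_deriv_on (A + B) S (\<lambda>x. f x + g x) (\<lambda>x v. Df x v + Dg x v)"
  proof (rule smooth_deriv_onI)
    show "0 \<le> A + B" using smooth_deriv_on_nonneg[OF f] smooth_deriv_on_nonneg[OF g] by simp
    show "((\<lambda>x. f x + g x) has_derivative (\<lambda>v. Df x v + Dg x v)) (at x)" if "x \<in> S" for x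
      using smooth_deriv_on_has_derivative[OF f that] smooth_deriv_on_has_derivative[OF g that]
      by (rule has_derivative_add)
    show "norm (f x + g x) \<le> A + B" if "x \<in> S" for x
      using f'(1)[OF that] g'(1)[OF that] norm_triangle_ineq[of "f x" "g x"] by linarith
    show "norm (Df x v + Dg x v) \<le> (A + B) * norm v" if "x \<in> S" for x v
      using f'(2)[OF that, of v] g'(2)[OF that, of v] norm_triangle_ineq[of "Df x v" "Dg x v"]
      by (simp add: distrib_right)
    show "norm (f x + g x - (f y + g y)) \<le> (A + B) * norm (x - y)" if "x \<in> S" "y \<in> S" for x y
      using f'(3)[OF that] g'(3)[OF that] norm_triangle_ineq[of "f x - f y" "g x - g y"]
      by (simp add: distrib_right add_diff_add)
    show "norm (Df x v + Dg x v - (Df y v + Dg y v)) \<le> (A + B) * norm (x - y) * norm v"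
      if "x \<in> S" "y \<in> S" for x y v
      using f'(4)[OF that, of v] g'(4)[OF that, of v]
        norm_triangle_ineq[of "Df x v - Df y v" "Dg x v - Dg y v"]
      by (simp add: distrib_right add_diff_add)
  qed
  then show ?thesis unfolding smooth_on_def by blast
qed

lemma smooth_on_sum:
  assumes "finite I" "\<And>i. i \<in> I \<Longrightarrow> smooth_on S (f i)"
  shows "smooth_on S (\<lambda>x. \<Sum>i\<in>I. f i x)"
  using assms
proof (induction I rule: finite_induct)
  case empty
  then show ?case using smooth_on_const[of S 0] by simp
next
  case (insert i I)
  then show ?case using smooth_on_add[of S "f i" "\<lambda>x. \<Sum>i\<in>I. f i x"] by simp
qed

lemma smooth_on_compose:
  assumes "smooth_on U F" "smooth_on S f" "f ` S \<subseteq> U"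
  shows "smooth_on S (\<lambda>x. F (f x))"
proof -
  obtain A DF B Df where F: "smooth_deriv_on A U F DF" and f: "smooth_deriv_on B S f Df"
    using assms(1,2) unfolding smooth_on_def by blast
  have A: "0 \<le> A" and B: "0 \<le> B"
    using smooth_deriv_on_nonneg[OF F] smooth_deriv_on_nonneg[OF f] .
  have fU: "f x \<in> U" if "x \<in> S" for x using assms(3) that by blast
  define K where "K = A + A * B + A * B * B"
  have AB: "A * B \<le> K" "A \<le> K" "0 \<le> A * B * B" unfolding K_def using A B by auto
  have "smooth_deriv_on K S (\<lambda>x. F (f x)) (\<lambda>x v. DF (f x) (Df x v))"
  proof (rule smooth_deriv_onI)
    show "0 \<le> K" unfolding K_def using A B by simp
    fix x assume x: "x \<in> S"
    show "((\<lambda>x. F (f x)) has_derivative (\<lambda>v. DF (f x) (Df x v))) (at x)"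
      using has_derivative_compose[OF smooth_deriv_on_has_derivative[OF f x]
          smooth_deriv_on_has_derivative[OF F fU[OF x]]] .
    show "norm (F (f x)) \<le> K" using smooth_deriv_on_bound[OF F fU[OF x]] AB by linarith
    fix v
    have "norm (DF (f x) (Df x v)) \<le> A * norm (Df x v)"
      by (rule smooth_deriv_on_deriv_bound[OF F fU[OF x]])
    also have "\<dots> \<le> A * (B * norm v)"
      using smooth_deriv_on_deriv_bound[OF f x] A by (rule mult_left_mono)
    also have "\<dots> \<le> K * norm v" using AB by (simp add: mult.assoc[symmetric] mult_right_mono)
    finally show "norm (DF (f x) (Df x v)) \<le> K * norm v" .
  next
    fix x y assume x: "x \<in> S" and y: "y \<in> S"
    have "norm (F (f x) - F (f y)) \<le> A * norm (f x - f y)"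
      by (rule smooth_deriv_on_lipschitz[OF F fU[OF x] fU[OF y]])
    also have "\<dots> \<le> A * (B * norm (x - y))"
      using smooth_deriv_on_lipschitz[OF f x y] A by (rule mult_left_mono)
    also have "\<dots> \<le> K * norm (x - y)" using AB by (simp add: mult.assoc[symmetric] mult_right_mono)
    finally show "norm (F (f x) - F (f y)) \<le> K * norm (x - y)" .
    fix v
    have "DF (f x) (Df x v) - DF (f y) (Df y v)
        = (DF (f x) (Df x v) - DF (f y) (Df x v)) + DF (f y) (Df x v - Df y v)"
      using has_derivative_linear[OF smooth_deriv_on_has_derivative[OF F fU[OF y]]]
      by (simp add: linear_diff)
    then have "norm (DF (f x) (Df x v) - DF (f y) (Df y v))
        \<le> norm (DF (f x) (Df x v) - DF (f y) (Df x v)) + norm (DF (f y) (Df x v - Df y v))"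
      by (metis norm_triangle_ineq)
    also have "norm (DF (f x) (Df x v) - DF (f y) (Df x v)) \<le> A * norm (f x - f y) * norm (Df x v)"
      by (rule smooth_deriv_on_deriv_lipschitz[OF F fU[OF x] fU[OF y]])
    also have "\<dots> \<le> A * (B * norm (x - y)) * (B * norm v)"
    proof (rule mult_mono)
      show "A * norm (f x - f y) \<le> A * (B * norm (x - y))"
        using smooth_deriv_on_lipschitz[OF f x y] A by (rule mult_left_mono)
    qed (use A B smooth_deriv_on_deriv_bound[OF f x] in simp_all)
    also have "norm (DF (f y) (Df x v - Df y v)) \<le> A * norm (Df x v - Df y v)"
      by (rule smooth_deriv_on_deriv_bound[OF F fU[OF y]])
    also have "\<dots> \<le> A * (B * norm (x - y) * norm v)"
      using smooth_deriv_on_deriv_lipschitz[OF f x y] A by (rule mult_left_mono)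
    also have "A * (B * norm (x - y)) * (B * norm v) + A * (B * norm (x - y) * norm v)
        = (A * B * B + A * B) * norm (x - y) * norm v"
      by (simp add: algebra_simps)
    also have "\<dots> \<le> K * norm (x - y) * norm v"
      unfolding K_def using A by (intro mult_right_mono) auto
    finally show "norm (DF (f x) (Df x v) - DF (f y) (Df y v)) \<le> K * norm (x - y) * norm v"
      by simp
  qed
  then show ?thesis unfolding smooth_on_def by blast
qed

lemma smooth_on_linear_compose:
  assumes "bounded_linear F" "smooth_on S f"
  shows "smooth_on S (\<lambda>x. F (f x))"
  using smooth_on_linear[OF assms(1) smooth_on_bounded[OF assms(2)]] assms(2)
  by (rule smooth_on_compose) simp

lemma smooth_on_diff:
  assumes "smooth_on S f" "smooth_on S g"
  shows "smooth_on S (\<lambda>x. f x - g x)"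
  using smooth_on_add[OF assms(1) smooth_on_linear_compose[OF bounded_linear_minus[OF bounded_linear_ident] assms(2)]]
  by simp

lemma bounded_bilinear_norm_le:
  assumes "\<And>a b. norm (p a b) \<le> norm a * norm b * Kp" "0 \<le> Kp" "norm a \<le> \<alpha>" "norm b \<le> \<beta>"
  shows "norm (p a b) \<le> Kp * \<alpha> * \<beta>"
proof -
  have "norm (p a b) \<le> norm a * norm b * Kp" by fact
  also have "\<dots> \<le> \<alpha> * \<beta> * Kp"
    using assms(2-4) by (intro mult_right_mono mult_mono) (auto intro: order_trans[OF norm_ge_zero])
  finally show ?thesis by (simp add: ac_simps)
qed

lemma smooth_on_bilinear:
  assumes p: "bounded_bilinear p" and "smooth_on S f" "smooth_on S g"
  shows "smooth_on S (\<lambda>x. p (f x) (g x))"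
proof -
  obtain A Df B Dg where f: "smooth_deriv_on A S f Df" and g: "smooth_deriv_on B S g Dg"
    using assms(2,3) unfolding smooth_on_def by blast
  have A: "0 \<le> A" and B: "0 \<le> B"
    using smooth_deriv_on_nonneg[OF f] smooth_deriv_on_nonneg[OF g] .
  note f' = smooth_deriv_on_bound[OF f] smooth_deriv_on_deriv_bound[OF f]
    smooth_deriv_on_lipschitz[OF f] smooth_deriv_on_deriv_lipschitz[OF f]
  note g' = smooth_deriv_on_bound[OF g] smooth_deriv_on_deriv_bound[OF g]
    smooth_deriv_on_lipschitz[OF g] smooth_deriv_on_deriv_lipschitz[OF g]
  obtain Kp where Kp: "Kp > 0" "\<And>a b. norm (p a b) \<le> norm a * norm b * Kp"
    using bounded_bilinear.pos_bounded[OF p] by blast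
  note pb = bounded_bilinear_norm_le[of p Kp, OF Kp(2) less_imp_le[OF Kp(1)]]
  have P: "0 \<le> Kp * A * B" using A B Kp by simp
  have "smooth_deriv_on (4 * (Kp * A * B)) S (\<lambda>x. p (f x) (g x))
      (\<lambda>x v. p (f x) (Dg x v) + p (Df x v) (g x))"
  proof (rule smooth_deriv_onI)
    show "0 \<le> 4 * (Kp * A * B)" using P by simp
    fix x assume x: "x \<in> S"
    show "((\<lambda>x. p (f x) (g x)) has_derivative (\<lambda>v. p (f x) (Dg x v) + p (Df x v) (g x))) (at x)"
      by (rule bounded_bilinear.FDERIV[OF p smooth_deriv_on_has_derivative[OF f x]
            smooth_deriv_on_has_derivative[OF g x]])
    show "norm (p (f x) (g x)) \<le> 4 * (Kp * A * B)" using pb[OF f'(1)[OF x] g'(1)[OF x]] P by linarith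
    fix v
    have "norm (p (f x) (Dg x v)) \<le> Kp * A * (B * norm v)" by (rule pb[OF f'(1)[OF x] g'(2)[OF x]])
    moreover have "norm (p (Df x v) (g x)) \<le> Kp * (A * norm v) * B" by (rule pb[OF f'(2)[OF x] g'(1)[OF x]])
    moreover have "0 \<le> Kp * A * B * norm v" using P by simp
    moreover have "Kp * A * (B * norm v) + Kp * (A * norm v) * B = 2 * (Kp * A * B * norm v)"
      "4 * (Kp * A * B) * norm v = 4 * (Kp * A * B * norm v)"
      by (simp_all add: algebra_simps)
    ultimately show "norm (p (f x) (Dg x v) + p (Df x v) (g x)) \<le> 4 * (Kp * A * B) * norm v"
      using norm_triangle_ineq[of "p (f x) (Dg x v)" "p (Df x v) (g x)"] by linarith
  next
    fix x y assume x: "x \<in> S" and y: "y \<in> S"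
    have split: "p (f x) (g x) - p (f y) (g y) = p (f x - f y) (g x) + p (f y) (g x - g y)"
      by (simp add: bounded_bilinear.diff_left[OF p] bounded_bilinear.diff_right[OF p])
    have "norm (p (f x) (g x) - p (f y) (g y)) \<le> norm (p (f x - f y) (g x)) + norm (p (f y) (g x - g y))"
      unfolding split by (rule norm_triangle_ineq)
    moreover have "norm (p (f x - f y) (g x)) \<le> Kp * (A * norm (x - y)) * B"
      by (rule pb[OF f'(3)[OF x y] g'(1)[OF x]])
    moreover have "norm (p (f y) (g x - g y)) \<le> Kp * A * (B * norm (x - y))"
      by (rule pb[OF f'(1)[OF y] g'(3)[OF x y]])
    moreover have "0 \<le> Kp * A * B * norm (x - y)" using P by simp
    moreover have "Kp * (A * norm (x - y)) * B + Kp * A * (B * norm (x - y)) = 2 * (Kp * A * B * norm (x - y))"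
      "4 * (Kp * A * B) * norm (x - y) = 4 * (Kp * A * B * norm (x - y))"
      by (simp_all add: algebra_simps)
    ultimately show "norm (p (f x) (g x) - p (f y) (g y)) \<le> 4 * (Kp * A * B) * norm (x - y)"
      by linarith
    fix v
    have split: "(p (f x) (Dg x v) + p (Df x v) (g x)) - (p (f y) (Dg y v) + p (Df y v) (g y)) =
       (p (f x - f y) (Dg x v) + p (f y) (Dg x v - Dg y v)) + (p (Df x v - Df y v) (g x) + p (Df y v) (g x - g y))"
      by (simp add: bounded_bilinear.diff_left[OF p] bounded_bilinear.diff_right[OF p] algebra_simps)
    have "norm ((p (f x) (Dg x v) + p (Df x v) (g x)) - (p (f y) (Dg y v) + p (Df y v) (g y))) \<le>
       (norm (p (f x - f y) (Dg x v)) + norm (p (f y) (Dg x v - Dg y v))) +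
       (norm (p (Df x v - Df y v) (g x)) + norm (p (Df y v) (g x - g y)))"
      unfolding split by (meson add_mono norm_triangle_ineq order_trans)
    moreover have "norm (p (f x - f y) (Dg x v)) \<le> Kp * (A * norm (x - y)) * (B * norm v)"
      by (rule pb[OF f'(3)[OF x y] g'(2)[OF x]])
    moreover have "norm (p (f y) (Dg x v - Dg y v)) \<le> Kp * A * (B * norm (x - y) * norm v)"
      by (rule pb[OF f'(1)[OF y] g'(4)[OF x y]])
    moreover have "norm (p (Df x v - Df y v) (g x)) \<le> Kp * (A * norm (x - y) * norm v) * B"
      by (rule pb[OF f'(4)[OF x y] g'(1)[OF x]])
    moreover have "norm (p (Df y v) (g x - g y)) \<le> Kp * (A * norm v) * (B * norm (x - y))"
      by (rule pb[OF f'(2)[OF y] g'(3)[OF x y]])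
    moreover have "Kp * (A * norm (x - y)) * (B * norm v) + Kp * A * (B * norm (x - y) * norm v)
        + Kp * (A * norm (x - y) * norm v) * B + Kp * (A * norm v) * (B * norm (x - y))
        = 4 * (Kp * A * B) * norm (x - y) * norm v"
      by (simp add: algebra_simps)
    ultimately show "norm ((p (f x) (Dg x v) + p (Df x v) (g x)) - (p (f y) (Dg y v) + p (Df y v) (g y)))
        \<le> 4 * (Kp * A * B) * norm (x - y) * norm v"
      by linarith
  qed
  then show ?thesis unfolding smooth_on_def by blast
qed

lemma smooth_on_mult:
  fixes f g :: "'a::real_normed_vector \<Rightarrow> real"
  shows "smooth_on S f \<Longrightarrow> smooth_on S g \<Longrightarrow> smooth_on S (\<lambda>x. f x * g x)"
  by (rule smooth_on_bilinear[OF bounded_bilinear_mult])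

lemma continuous_on_interval_abs_bound:
  fixes f :: "real \<Rightarrow> real"
  assumes "continuous_on {a..b} f"
  obtains M where "0 \<le> M" "\<And>t. t \<in> {a..b} \<Longrightarrow> \<bar>f t\<bar> \<le> M"
proof -
  have "bounded (f ` {a..b})"
    by (rule compact_imp_bounded[OF compact_continuous_image[OF assms compact_Icc]])
  then obtain M where "0 < M" "\<And>t. t \<in> {a..b} \<Longrightarrow> \<bar>f t\<bar> \<le> M"
    unfolding bounded_pos by auto
  then show ?thesis by (intro that[of M]) auto
qed

lemma smooth_on_interval_C2:
  fixes \<phi> \<phi>' \<phi>'' :: "real \<Rightarrow> real"
  assumes d1: "\<And>t. t \<in> {a..b} \<Longrightarrow> (\<phi> has_real_derivative \<phi>' t) (at t)"
    and d2: "\<And>t. t \<in> {a..b} \<Longrightarrow> (\<phi>' has_real_derivative \<phi>'' t) (at t)"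
    and c: "continuous_on {a..b} \<phi>''"
  shows "smooth_on {a..b} \<phi>"
proof -
  have "continuous_on {a..b} \<phi>" "continuous_on {a..b} \<phi>'"
    using d1 d2 by (meson DERIV_isCont continuous_at_imp_continuous_on)+
  then obtain M0 M1 M2 where
    M0: "0 \<le> M0" "\<And>t. t \<in> {a..b} \<Longrightarrow> \<bar>\<phi> t\<bar> \<le> M0" and
    M1: "0 \<le> M1" "\<And>t. t \<in> {a..b} \<Longrightarrow> \<bar>\<phi>' t\<bar> \<le> M1" and
    M2: "0 \<le> M2" "\<And>t. t \<in> {a..b} \<Longrightarrow> \<bar>\<phi>'' t\<bar> \<le> M2"
    using continuous_on_interval_abs_bound c by metis
  have lip: "\<bar>g s - g t\<bar> \<le> M * \<bar>s - t\<bar>"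
    if "\<And>t. t \<in> {a..b} \<Longrightarrow> (g has_real_derivative g' t) (at t)" "\<And>t. t \<in> {a..b} \<Longrightarrow> \<bar>g' t\<bar> \<le> M"
      "s \<in> {a..b}" "t \<in> {a..b}" for g g' :: "real \<Rightarrow> real" and M s t
    using field_differentiable_bound[of "{a..b}" g g' M s t] that
    by (auto intro: has_field_derivative_at_within)
  define K where "K = M0 + M1 + M2"
  have "smooth_deriv_on K {a..b} \<phi> (\<lambda>t v. \<phi>' t * v)"
  proof (rule smooth_deriv_onI)
    show "0 \<le> K" unfolding K_def using M0 M1 M2 by simp
    fix x assume x: "x \<in> {a..b}"
    show "(\<phi> has_derivative (\<lambda>v. \<phi>' x * v)) (at x)"
      using d1[OF x] by (simp add: has_field_derivative_def)
    show "norm (\<phi> x) \<le> K" unfolding K_def using M0(2)[OF x] M1 M2 by simp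
    show "norm (\<phi>' x * v) \<le> K * norm v" for v
      unfolding K_def using M1(2)[OF x] M0 M2 by (simp add: abs_mult mult_right_mono)
  next
    fix x y assume x: "x \<in> {a..b}" and y: "y \<in> {a..b}"
    show "norm (\<phi> x - \<phi> y) \<le> K * norm (x - y)"
      using lip[OF d1 M1(2) x y] M0 M2 unfolding K_def
      by (smt (verit, best) abs_ge_zero mult_right_mono real_norm_def)
    show "norm (\<phi>' x * v - \<phi>' y * v) \<le> K * norm (x - y) * norm v" for v
    proof -
      have "\<bar>\<phi>' x - \<phi>' y\<bar> * \<bar>v\<bar> \<le> (M2 * \<bar>x - y\<bar>) * \<bar>v\<bar>"
        using lip[OF d2 M2(2) x y] by (rule mult_right_mono) simp_all
      also have "\<dots> \<le> K * \<bar>x - y\<bar> * \<bar>v\<bar>"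
        unfolding K_def using M0 M1 by (intro mult_right_mono) auto
      finally show ?thesis by (simp add: left_diff_distrib[symmetric] abs_mult)
    qed
  qed
  then show ?thesis unfolding smooth_on_def by blast
qed

section \<open>Gradients and first-order conditions\<close>

lemma linear_eq_inner_Basis_sum:
  fixes f :: "'a::euclidean_space \<Rightarrow> real"
  assumes "linear f"
  shows "f v = inner (\<Sum>b\<in>Basis. f b *\<^sub>R b) v"
proof -
  have "f v = f (\<Sum>b\<in>Basis. (v \<bullet> b) *\<^sub>R b)" by (simp add: euclidean_representation)
  also have "\<dots> = (\<Sum>b\<in>Basis. (v \<bullet> b) * f b)" using assms by (simp add: linear_sum linear_scale)
  also have "\<dots> = inner (\<Sum>b\<in>Basis. f b *\<^sub>R b) v"
    by (simp add: inner_sum_left inner_sum_right inner_commute mult.commute)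
  finally show ?thesis .
qed

lemma has_derivative_eq_inner_grad:
  fixes L :: "'a::euclidean_space \<Rightarrow> real"
  assumes "(L has_derivative D) (at x)"
  shows "D v = inner (grad L x) v"
proof -
  define G where "G = (\<Sum>b\<in>Basis. D b *\<^sub>R b)"
  have D: "D = (\<lambda>v. inner G v)"
    unfolding G_def by (rule ext linear_eq_inner_Basis_sum has_derivative_linear assms)+
  have "grad L x = G"
    unfolding grad_def
  proof (rule the_equality)
    show "(L has_derivative (\<lambda>v. inner G v)) (at x)" using assms by (simp add: D)
    fix G' assume "(L has_derivative (\<lambda>v. inner G' v)) (at x)"
    from has_derivative_unique[OF this assms[unfolded D]]
    have "inner G' (G' - G) = inner G (G' - G)" by (rule fun_cong)
    then have "inner (G' - G) (G' - G) = 0" by (simp add: inner_diff_left)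
    then show "G' = G" by simp
  qed
  then show ?thesis by (simp add: D)
qed

lemma lipschitz_on_grad:
  fixes L :: "'a::euclidean_space \<Rightarrow> real"
  assumes L: "smooth_deriv_on K S L D"
  shows "K-lipschitz_on S (grad L)"
proof (rule lipschitz_onI)
  show "0 \<le> K" by (rule smooth_deriv_on_nonneg[OF L])
  fix x y assume xy: "x \<in> S" "y \<in> S"
  define w where "w = grad L x - grad L y"
  have "(norm w)\<^sup>2 = D x w - D y w"
    using has_derivative_eq_inner_grad[OF smooth_deriv_on_has_derivative[OF L]] xy
    unfolding w_def by (simp add: power2_norm_eq_inner inner_diff_left)
  also have "\<dots> \<le> K * norm (x - y) * norm w"
    using abs_ge_self[of "D x w - D y w"] smooth_deriv_on_deriv_lipschitz[OF L xy, of w]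
    unfolding real_norm_def by linarith
  finally have "norm w * norm w \<le> (K * norm (x - y)) * norm w" by (simp add: power2_eq_square)
  then show "dist (grad L x) (grad L y) \<le> K * dist x y"
    using \<open>0 \<le> K\<close> unfolding w_def dist_norm by (cases "grad L x = grad L y") auto
qed

lemma descent_lemma:
  fixes L :: "'a::{real_normed_vector, perfect_space} \<Rightarrow> real"
  assumes "smooth_deriv_on K S L D" "convex S" "x \<in> S" "y \<in> S"
  shows "\<bar>L y - L x - D x (y - x)\<bar> \<le> K * (norm (y - x))\<^sup>2"
proof -
  have seg: "closed_segment x y \<subseteq> S" using assms(2-4) by (simp add: closed_segment_subset)
  have "norm (L y - L x - D x (y - x)) \<le> norm (y - x) * (K * norm (y - x))"
  proof (rule differentiable_bound_linearization[where S = "closed_segment x y"])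
    show "x + t *\<^sub>R (y - x) \<in> closed_segment x y" if "t \<in> {0..1}" for t
      using that by (auto simp: in_segment algebra_simps intro!: exI[of _ t])
    show "(L has_derivative D z) (at z within closed_segment x y)" if "z \<in> closed_segment x y" for z
      using smooth_deriv_on_has_derivative[OF assms(1)] seg that by (blast intro: has_derivative_at_withinI)
    show "onorm (D z - D x) \<le> K * norm (y - x)" if "z \<in> closed_segment x y" for z
    proof (rule onorm_le)
      fix v
      have "norm (D z v - D x v) \<le> K * norm (z - x) * norm v"
        using smooth_deriv_on_deriv_lipschitz[OF assms(1)] seg that assms(3) by blast
      also have "\<dots> \<le> K * norm (y - x) * norm v"
        using segment_bound(1)[OF that] smooth_deriv_on_nonneg[OF assms(1)]
        by (intro mult_right_mono mult_left_mono) auto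
      finally show "norm ((D z - D x) v) \<le> K * norm (y - x) * norm v" by simp
    qed
  qed (use assms(3) in simp)
  then show ?thesis by (simp add: power2_eq_square ac_simps)
qed

lemma convex_min_first_order:
  fixes L :: "'a::real_normed_vector \<Rightarrow> real"
  assumes d: "(L has_derivative D) (at x)"
    and T: "convex T" "x \<in> T" "y \<in> T"
    and min: "\<And>z. z \<in> T \<Longrightarrow> L x \<le> L z"
  shows "D (y - x) \<ge> 0"
proof (rule ccontr)
  assume neg: "\<not> D (y - x) \<ge> 0"
  define p where "p t = x + t *\<^sub>R (y - x)" for t :: real
  have "(p has_derivative (\<lambda>s. s *\<^sub>R (y - x))) (at 0)"
    unfolding p_def by (auto intro!: derivative_eq_intros)
  then have "((\<lambda>t. L (p t)) has_derivative (\<lambda>s. D (s *\<^sub>R (y - x)))) (at 0)"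
    using has_derivative_compose[of p _ 0 UNIV L D] d by (simp add: p_def)
  moreover have "(\<lambda>s. D (s *\<^sub>R (y - x))) = (\<lambda>s. D (y - x) * s)"
    using has_derivative_linear[OF d] by (simp add: linear_scale mult.commute)
  ultimately have "DERIV (\<lambda>t. L (p t)) 0 :> D (y - x)"
    by (simp add: has_field_derivative_def)
  from DERIV_neg_dec_right[OF this] neg
  obtain e where e: "e > 0" "\<And>h. 0 < h \<Longrightarrow> h < e \<Longrightarrow> L (p h) < L (p 0)"
    by auto
  define h where "h = min (e / 2) 1"
  have h: "0 < h" "h < e" "h \<le> 1" unfolding h_def using e by auto
  have "p h = (1 - h) *\<^sub>R x + h *\<^sub>R y" unfolding p_def by (simp add: algebra_simps)
  then have "p h \<in> T" using T h by (simp add: convex_def)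
  moreover have "L (p h) < L x" using e(2)[OF h(1,2)] by (simp add: p_def)
  ultimately show False using min by fastforce
qed

section \<open>The stationarity measure\<close>

lemma inner_normalized_ge: "- norm G \<le> inner G ((1 / norm (Z' - Z)) *\<^sub>R (Z' - Z))"
proof -
  have "norm ((1 / norm (Z' - Z)) *\<^sub>R (Z' - Z)) \<le> 1" by (cases "Z' = Z") auto
  then have "\<bar>inner G ((1 / norm (Z' - Z)) *\<^sub>R (Z' - Z))\<bar> \<le> norm G"
    using Cauchy_Schwarz_ineq2[of G "(1 / norm (Z' - Z)) *\<^sub>R (Z' - Z)"]
    by (meson mult_left_le norm_ge_zero order_trans)
  then show ?thesis by linarith
qed

lemma stat_measure_ge:
  assumes "Z' \<in> \<Theta>"
  shows "- inner (grad L Z) ((1 / norm (Z' - Z)) *\<^sub>R (Z' - Z)) \<le> stat_measure L \<Theta> Z"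
proof -
  have "(INF Z''\<in>\<Theta>. inner (grad L Z) ((1 / norm (Z'' - Z)) *\<^sub>R (Z'' - Z)))
      \<le> inner (grad L Z) ((1 / norm (Z' - Z)) *\<^sub>R (Z' - Z))"
    by (rule cINF_lower[OF bdd_belowI2[where m = "- norm (grad L Z)"] assms]) (rule inner_normalized_ge)
  then show ?thesis unfolding stat_measure_def by simp
qed

lemma stat_measure_nonneg: "Z \<in> \<Theta> \<Longrightarrow> 0 \<le> stat_measure L \<Theta> Z"
  using stat_measure_ge[of Z \<Theta> L Z] by simp

lemma stat_measure_le:
  assumes Z: "Z \<in> \<Theta>" and c: "0 \<le> c"
    and bound: "\<And>Z'. Z' \<in> \<Theta> \<Longrightarrow> - inner (grad L Z) (Z' - Z) \<le> norm (Z' - Z) * c"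
  shows "stat_measure L \<Theta> Z \<le> c"
proof -
  have "- c \<le> (INF Z'\<in>\<Theta>. inner (grad L Z) ((1 / norm (Z' - Z)) *\<^sub>R (Z' - Z)))"
  proof (rule cINF_greatest)
    show "\<Theta> \<noteq> {}" using Z by auto
    fix Z' assume Z': "Z' \<in> \<Theta>"
    show "- c \<le> inner (grad L Z) ((1 / norm (Z' - Z)) *\<^sub>R (Z' - Z))"
    proof (cases "Z' = Z")
      case False
      then have "- inner (grad L Z) (Z' - Z) / norm (Z' - Z) \<le> c"
        by (subst pos_divide_le_eq) (use bound[OF Z'] in \<open>simp_all add: mult.commute\<close>)
      moreover have "inner (grad L Z) ((1 / norm (Z' - Z)) *\<^sub>R (Z' - Z)) = inner (grad L Z) (Z' - Z) / norm (Z' - Z)"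
        by simp
      ultimately show ?thesis by simp
    qed (use c in simp)
  qed
  then show ?thesis unfolding stat_measure_def by simp
qed

section \<open>One step of block coordinate descent with diminishing radius\<close>

lemma ball_argmin_stationarity:
  fixes L :: "'a::{real_normed_vector, perfect_space} \<Rightarrow> real"
  assumes L: "smooth_deriv_on K S L D" and S: "convex S"
    and Yp: "Yp \<in> S" and Yn: "Yn \<in> S" "dist Yn Yp \<le> r" and r: "r > 0"
    and min: "\<And>Y. Y \<in> S \<Longrightarrow> dist Y Yp \<le> r \<Longrightarrow> L Yn \<le> L Y"
    and Y': "Y' \<in> S"
  shows "- D Yn (Y' - Yn) \<le> norm (Y' - Yn) * ((L Yp - L Yn) / r + K * r)"
proof (cases "Y' = Yn")
  case True
  then show ?thesis
    using has_derivative_linear[OF smooth_deriv_on_has_derivative[OF L Yn(1)]] by (simp add: linear_0)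
next
  case False
  define n where "n = norm (Y' - Yn)"
  have n: "n > 0" unfolding n_def using False by simp
  have lin: "linear (D Yn)" using smooth_deriv_on_has_derivative[OF L Yn(1)] by (rule has_derivative_linear)
  have "norm (Yp - Yn) \<le> r" using Yn(2) by (simp add: dist_norm norm_minus_commute)
  then have "K * (norm (Yp - Yn))\<^sup>2 \<le> K * r\<^sup>2"
    using smooth_deriv_on_nonneg[OF L] by (simp add: mult_left_mono power_mono)
  with descent_lemma[OF L S Yn(1) Yp]
  have desc: "D Yn (Yp - Yn) \<le> L Yp - L Yn + K * r\<^sup>2" by linarith
  \<comment> \<open>The point P on the segment from Yp to Y' at distance at most r from Yp is feasible for
    the ball-constrained problem, and D Yn (P - Yn) is a convex combination of the two directions.\<close>
  define P where "P = (r / (r + n)) *\<^sub>R Y' + (n / (r + n)) *\<^sub>R Yp"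
  have weights: "r / (r + n) + n / (r + n) = 1" using r n by (simp add: add_divide_distrib[symmetric])
  have "P \<in> S" unfolding P_def using S Y' Yp weights r n by (simp add: convex_def)
  moreover have "dist P Yp \<le> r"
  proof -
    have "P - Yp = (r / (r + n)) *\<^sub>R ((Y' - Yn) + (Yn - Yp))"
      unfolding P_def using weights by (simp add: algebra_simps) (metis add_diff_cancel_left' scaleR_add_left scaleR_one)
    then have "norm (P - Yp) = (r / (r + n)) * norm ((Y' - Yn) + (Yn - Yp))" using r n by simp
    also have "\<dots> \<le> (r / (r + n)) * (n + r)"
    proof (rule mult_left_mono)
      show "norm ((Y' - Yn) + (Yn - Yp)) \<le> n + r"
        using norm_triangle_ineq[of "Y' - Yn" "Yn - Yp"] Yn(2) by (simp add: n_def dist_norm)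
    qed (use r n in simp)
    also have "\<dots> = r" using r n by (simp add: add.commute)
    finally show ?thesis by (simp add: dist_norm)
  qed
  ultimately have first_order: "D Yn (P - Yn) \<ge> 0"
    using convex_min_first_order[OF smooth_deriv_on_has_derivative[OF L Yn(1)], of "S \<inter> cball Yp r" P]
      S Yn min by (auto simp: convex_Int dist_commute)
  have "P - Yn = (r / (r + n)) *\<^sub>R (Y' - Yn) + (n / (r + n)) *\<^sub>R (Yp - Yn)"
    unfolding P_def using weights by (simp add: algebra_simps) (metis add_diff_cancel_left' scaleR_add_left scaleR_one)
  then have DP: "D Yn (P - Yn) = (r / (r + n)) * D Yn (Y' - Yn) + (n / (r + n)) * D Yn (Yp - Yn)"
    using lin by (simp add: linear_add linear_scale)
  have "(r + n) * D Yn (P - Yn) = r * D Yn (Y' - Yn) + n * D Yn (Yp - Yn)"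
    unfolding DP using r n by (simp add: distrib_left)
  moreover have "0 \<le> (r + n) * D Yn (P - Yn)" using first_order r n by simp
  moreover have "n * D Yn (Yp - Yn) \<le> n * (L Yp - L Yn + K * r\<^sup>2)"
    using desc n by (simp add: mult_left_mono)
  ultimately have "r * (- D Yn (Y' - Yn)) \<le> n * (L Yp - L Yn + K * r\<^sup>2)" by linarith
  then have "- D Yn (Y' - Yn) \<le> n * (L Yp - L Yn + K * r\<^sup>2) / r"
    using r by (simp add: pos_le_divide_eq mult.commute)
  also have "n * (L Yp - L Yn + K * r\<^sup>2) / r = n * ((L Yp - L Yn) / r + K * r)"
    using r by (simp add: field_simps power2_eq_square)
  finally show ?thesis unfolding n_def .
qed

(* One block update of BCD-DR: \<iota> places the block variable into the full parameter tuple. *)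
lemma slice_argmin_stationarity:
  fixes L :: "'a::{real_normed_vector, perfect_space} \<Rightarrow> real" and \<iota> :: "'b::metric_space \<Rightarrow> 'a"
  assumes L: "smooth_deriv_on K \<Theta> L D"
    and \<iota>: "\<And>u v. dist (\<iota> u) (\<iota> v) = dist u v" "convex (\<iota> ` C)" "\<iota> ` C \<subseteq> \<Theta>"
    and r: "r > 0" and u0: "u0 \<in> C"
    and min: "is_arg_min (\<lambda>u. L (\<iota> u)) (\<lambda>u. u \<in> C \<and> dist u u0 \<le> r) u1"
    and Z: "Z \<in> \<Theta>" "norm (Z - \<iota> u1) \<le> \<rho>"
    and u': "u' \<in> C" "dist u' u1 \<le> N"
  shows "- D Z (\<iota> u' - \<iota> u1) \<le> N * ((L (\<iota> u0) - L (\<iota> u1)) / r + K * r + K * \<rho>)"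
proof -
  have u1: "u1 \<in> C" "dist u1 u0 \<le> r" and le: "\<And>u. u \<in> C \<Longrightarrow> dist u u0 \<le> r \<Longrightarrow> L (\<iota> u1) \<le> L (\<iota> u)"
    using min unfolding is_arg_min_linorder by auto
  have K: "0 \<le> K" by (rule smooth_deriv_on_nonneg[OF L])
  define e where "e = \<iota> u' - \<iota> u1"
  have e: "norm e = dist u' u1" unfolding e_def by (simp add: \<iota>(1) flip: dist_norm)
  have "- D (\<iota> u1) e \<le> norm e * ((L (\<iota> u0) - L (\<iota> u1)) / r + K * r)"
    unfolding e_def
  proof (rule ball_argmin_stationarity[OF smooth_deriv_on_subset[OF L \<iota>(3)] \<iota>(2) _ _ _ r])
    show "L (\<iota> u1) \<le> L Y" if "Y \<in> \<iota> ` C" "dist Y (\<iota> u0) \<le> r" for Y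
      using that le \<iota>(1) by auto
  qed (use u0 u1 u' \<iota>(1) in auto)
  moreover have "\<bar>D Z e - D (\<iota> u1) e\<bar> \<le> K * \<rho> * norm e"
  proof -
    have "\<bar>D Z e - D (\<iota> u1) e\<bar> \<le> K * norm (Z - \<iota> u1) * norm e"
      using smooth_deriv_on_deriv_lipschitz[OF L Z(1)] \<iota>(3) u1(1) by auto
    also have "\<dots> \<le> K * \<rho> * norm e" using Z(2) K by (intro mult_right_mono mult_left_mono) auto
    finally show ?thesis .
  qed
  ultimately have "- D Z e \<le> norm e * ((L (\<iota> u0) - L (\<iota> u1)) / r + K * r + K * \<rho>)"
    by (simp add: algebra_simps abs_le_iff)
  also have "\<dots> \<le> N * ((L (\<iota> u0) - L (\<iota> u1)) / r + K * r + K * \<rho>)"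
  proof (rule mult_right_mono)
    show "norm e \<le> N" using e u'(2) by simp
    have "L (\<iota> u1) \<le> L (\<iota> u0)" using le u0 r by simp
    moreover have "0 \<le> \<rho>" using Z(2) norm_ge_zero[of "Z - \<iota> u1"] by linarith
    ultimately show "0 \<le> (L (\<iota> u0) - L (\<iota> u1)) / r + K * r + K * \<rho>"
      using r K by (intro add_nonneg_nonneg divide_nonneg_pos mult_nonneg_nonneg) auto
  qed
  finally show ?thesis unfolding e_def .
qed

lemma norm_Pair4_le: "norm (a, b, c, d) \<le> norm a + norm b + norm c + norm d"
  using norm_Pair_le[of a "(b, c, d)"] norm_Pair_le[of b "(c, d)"] norm_Pair_le[of c d] by linarith

lemma dist_Pair4_components_le:
  "dist a a' \<le> dist (a, b, c, d) (a', b', c', d')" "dist b b' \<le> dist (a, b, c, d) (a', b', c', d')"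
  "dist c c' \<le> dist (a, b, c, d) (a', b', c', d')" "dist d d' \<le> dist (a, b, c, d) (a', b', c', d')"
  using dist_fst_le[of "(a, b, c, d)" "(a', b', c', d')"] dist_snd_le[of "(a, b, c, d)" "(a', b', c', d')"]
    dist_fst_le[of "(b, c, d)" "(b', c', d')"] dist_snd_le[of "(b, c, d)" "(b', c', d')"]
    dist_fst_le[of "(c, d)" "(c', d')"] dist_snd_le[of "(c, d)" "(c', d')"]
  by simp_all

context
  fixes L :: "('a::euclidean_space \<times> 'b::euclidean_space \<times> 'c::euclidean_space \<times> 'd::euclidean_space) \<Rightarrow> real"
    and CW CH Cb CG W0 H0 b0 G0 W1 H1 b1 G1 r
  assumes Z0: "(W0, H0, b0, G0) \<in> CW \<times> CH \<times> Cb \<times> CG" and r: "r > 0"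
    and m1: "is_arg_min (\<lambda>W. L (W, H0, b0, G0)) (\<lambda>W. W \<in> CW \<and> dist W W0 \<le> r) W1"
    and m2: "is_arg_min (\<lambda>b. L (W1, H0, b, G0)) (\<lambda>b. b \<in> Cb \<and> dist b b0 \<le> r) b1"
    and m3: "is_arg_min (\<lambda>G. L (W1, H0, b1, G)) (\<lambda>G. G \<in> CG \<and> dist G G0 \<le> r) G1"
    and m4: "is_arg_min (\<lambda>H. L (W1, H, b1, G1)) (\<lambda>H. H \<in> CH \<and> dist H H0 \<le> r) H1"
begin

lemma bcd_dr_step_blocks:
  "W1 \<in> CW" "dist W1 W0 \<le> r" "b1 \<in> Cb" "dist b1 b0 \<le> r" "G1 \<in> CG" "dist G1 G0 \<le> r"
  "H1 \<in> CH" "dist H1 H0 \<le> r"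
  using m1 m2 m3 m4 unfolding is_arg_min_linorder by auto

lemma bcd_dr_step_in: "(W1, H1, b1, G1) \<in> CW \<times> CH \<times> Cb \<times> CG"
  using bcd_dr_step_blocks by simp

lemma bcd_dr_step_descent: "L (W1, H1, b1, G1) \<le> L (W0, H0, b0, G0)"
proof -
  have "L (W1, H0, b0, G0) \<le> L (W0, H0, b0, G0)" using m1 Z0 r unfolding is_arg_min_linorder by simp
  moreover have "L (W1, H0, b1, G0) \<le> L (W1, H0, b0, G0)" using m2 Z0 r unfolding is_arg_min_linorder by simp
  moreover have "L (W1, H0, b1, G1) \<le> L (W1, H0, b1, G0)" using m3 Z0 r unfolding is_arg_min_linorder by simp
  moreover have "L (W1, H1, b1, G1) \<le> L (W1, H0, b1, G1)" using m4 Z0 r unfolding is_arg_min_linorder by simp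
  ultimately show ?thesis by linarith
qed

lemma bcd_dr_step_dist: "dist (W1, H1, b1, G1) (W0, H0, b0, G0) \<le> 4 * r"
  using norm_Pair4_le[of "W1 - W0" "H1 - H0" "b1 - b0" "G1 - G0"] bcd_dr_step_blocks
  by (simp add: dist_norm)

lemma bcd_dr_step_stationarity:
  assumes L: "smooth_deriv_on K (CW \<times> CH \<times> Cb \<times> CG) L D"
    and cv: "convex CW" "convex CH" "convex Cb" "convex CG"
    and Z': "(W', H', b', G') \<in> CW \<times> CH \<times> Cb \<times> CG"
  defines "N \<equiv> dist (W', H', b', G') (W1, H1, b1, G1)"
  shows "- D (W1, H1, b1, G1) ((W', H', b', G') - (W1, H1, b1, G1))
    \<le> N * ((L (W0, H0, b0, G0) - L (W1, H1, b1, G1)) / r + 16 * K * r)"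
proof -
  let ?Z1 = "(W1, H1, b1, G1)"
  note blocks = bcd_dr_step_blocks
  have Z0': "W0 \<in> CW" "H0 \<in> CH" "b0 \<in> Cb" "G0 \<in> CG"
    and Z'': "W' \<in> CW" "H' \<in> CH" "b' \<in> Cb" "G' \<in> CG"
    using Z0 Z' by auto
  have Z1: "?Z1 \<in> CW \<times> CH \<times> Cb \<times> CG" by (rule bcd_dr_step_in)
  note N = dist_Pair4_components_le[where a = W' and a' = W1 and b = H' and b' = H1 and c = b' and c' = b1
      and d = G' and d' = G1, folded N_def]
  have near: "norm (?Z1 - (W1, H0, b0, G0)) \<le> 3 * r" "norm (?Z1 - (W1, H0, b1, G0)) \<le> 3 * r"
      "norm (?Z1 - (W1, H0, b1, G1)) \<le> 3 * r" "norm (?Z1 - ?Z1) \<le> 3 * r"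
    using norm_Pair4_le[of "0 :: 'a" "H1 - H0" "b1 - b0" "G1 - G0"]
      norm_Pair4_le[of "0 :: 'a" "H1 - H0" "0 :: 'c" "G1 - G0"]
      norm_Pair4_le[of "0 :: 'a" "H1 - H0" "0 :: 'c" "0 :: 'd"] blocks r
    by (auto simp: dist_norm)
  note slice = slice_argmin_stationarity[OF L _ _ _ r _ _ Z1]
  have "- D ?Z1 ((W', H0, b0, G0) - (W1, H0, b0, G0))
      \<le> N * ((L (W0, H0, b0, G0) - L (W1, H0, b0, G0)) / r + K * r + K * (3 * r))"
  proof (rule slice[where \<iota> = "\<lambda>W. (W, H0, b0, G0)", OF _ _ _ Z0'(1) m1 near(1) Z''(1) N(1)])
    have "(\<lambda>W. (W, H0, b0, G0)) ` CW = CW \<times> {H0} \<times> {b0} \<times> {G0}" by auto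
    then show "convex ((\<lambda>W. (W, H0, b0, G0)) ` CW)" using cv by (simp add: convex_Times)
  qed (use Z0' in \<open>auto simp: dist_Pair_Pair\<close>)
  moreover have "- D ?Z1 ((W1, H0, b', G0) - (W1, H0, b1, G0))
      \<le> N * ((L (W1, H0, b0, G0) - L (W1, H0, b1, G0)) / r + K * r + K * (3 * r))"
  proof (rule slice[where \<iota> = "\<lambda>b. (W1, H0, b, G0)", OF _ _ _ Z0'(3) m2 near(2) Z''(3) N(3)])
    have "(\<lambda>b. (W1, H0, b, G0)) ` Cb = {W1} \<times> {H0} \<times> Cb \<times> {G0}" by auto
    then show "convex ((\<lambda>b. (W1, H0, b, G0)) ` Cb)" using cv by (simp add: convex_Times)
  qed (use Z0' blocks in \<open>auto simp: dist_Pair_Pair\<close>)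
  moreover have "- D ?Z1 ((W1, H0, b1, G') - (W1, H0, b1, G1))
      \<le> N * ((L (W1, H0, b1, G0) - L (W1, H0, b1, G1)) / r + K * r + K * (3 * r))"
  proof (rule slice[where \<iota> = "\<lambda>G. (W1, H0, b1, G)", OF _ _ _ Z0'(4) m3 near(3) Z''(4) N(4)])
    have "(\<lambda>G. (W1, H0, b1, G)) ` CG = {W1} \<times> {H0} \<times> {b1} \<times> CG" by auto
    then show "convex ((\<lambda>G. (W1, H0, b1, G)) ` CG)" using cv by (simp add: convex_Times)
  qed (use Z0' blocks in \<open>auto simp: dist_Pair_Pair\<close>)
  moreover have "- D ?Z1 ((W1, H', b1, G1) - ?Z1)
      \<le> N * ((L (W1, H0, b1, G1) - L ?Z1) / r + K * r + K * (3 * r))"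
  proof (rule slice[where \<iota> = "\<lambda>H. (W1, H, b1, G1)", OF _ _ _ Z0'(2) m4 near(4) Z''(2) N(2)])
    have "(\<lambda>H. (W1, H, b1, G1)) ` CH = {W1} \<times> CH \<times> {b1} \<times> {G1}" by auto
    then show "convex ((\<lambda>H. (W1, H, b1, G1)) ` CH)" using cv by (simp add: convex_Times)
  qed (use blocks in \<open>auto simp: dist_Pair_Pair\<close>)
  moreover have "D ?Z1 ((W', H', b', G') - ?Z1) =
      D ?Z1 ((W', H0, b0, G0) - (W1, H0, b0, G0)) + D ?Z1 ((W1, H0, b', G0) - (W1, H0, b1, G0)) +
      D ?Z1 ((W1, H0, b1, G') - (W1, H0, b1, G1)) + D ?Z1 ((W1, H', b1, G1) - ?Z1)"
    using has_derivative_linear[OF smooth_deriv_on_has_derivative[OF L Z1]]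
    by (simp flip: linear_add)
  moreover have "N * ((L (W0, H0, b0, G0) - L (W1, H0, b0, G0)) / r + K * r + K * (3 * r)) +
      N * ((L (W1, H0, b0, G0) - L (W1, H0, b1, G0)) / r + K * r + K * (3 * r)) +
      N * ((L (W1, H0, b1, G0) - L (W1, H0, b1, G1)) / r + K * r + K * (3 * r)) +
      N * ((L (W1, H0, b1, G1) - L ?Z1) / r + K * r + K * (3 * r)) =
      N * ((L (W0, H0, b0, G0) - L ?Z1) / r + 16 * K * r)"
    using r by (simp add: field_simps)
  ultimately show ?thesis by linarith
qed

end

lemma bcd_dr_step_at:
  fixes L :: "('a::euclidean_space \<times> 'b::euclidean_space \<times> 'c::euclidean_space \<times> 'd::euclidean_space) \<Rightarrow> real"
  assumes L: "smooth_deriv_on K (CW \<times> CH \<times> Cb \<times> CG) L D"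
    and cv: "convex CW" "convex CH" "convex Cb" "convex CG"
    and r_pos: "\<forall>t\<ge>1. r t > 0" and iter: "bcd_dr L CW CH Cb CG r Z"
    and k: "k \<ge> 1" and prev: "Z (k - 1) \<in> CW \<times> CH \<times> Cb \<times> CG"
  shows "Z k \<in> CW \<times> CH \<times> Cb \<times> CG" and "L (Z k) \<le> L (Z (k - 1))"
    and "dist (Z k) (Z (k - 1)) \<le> 4 * r k"
    and "\<And>Z'. Z' \<in> CW \<times> CH \<times> Cb \<times> CG \<Longrightarrow>
      - D (Z k) (Z' - Z k) \<le> norm (Z' - Z k) * ((L (Z (k - 1)) - L (Z k)) / r k + 16 * K * r k)"
proof -
  obtain W0 H0 b0 G0 where e0: "Z (k - 1) = (W0, H0, b0, G0)" by (cases "Z (k - 1)") auto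
  obtain W1 H1 b1 G1 where e1: "Z k = (W1, H1, b1, G1)" by (cases "Z k") auto
  from iter[unfolded bcd_dr_def, THEN conjunct2, rule_format, OF k]
  have m: "is_arg_min (\<lambda>W. L (W, H0, b0, G0)) (\<lambda>W. W \<in> CW \<and> dist W W0 \<le> r k) W1"
      "is_arg_min (\<lambda>b. L (W1, H0, b, G0)) (\<lambda>b. b \<in> Cb \<and> dist b b0 \<le> r k) b1"
      "is_arg_min (\<lambda>G. L (W1, H0, b1, G)) (\<lambda>G. G \<in> CG \<and> dist G G0 \<le> r k) G1"
      "is_arg_min (\<lambda>H. L (W1, H, b1, G1)) (\<lambda>H. H \<in> CH \<and> dist H H0 \<le> r k) H1"
    by (simp_all only: e0 e1 prod.case)
  have rk: "r k > 0" using r_pos k by simp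
  note step = prev[unfolded e0] rk m
  show "Z k \<in> CW \<times> CH \<times> Cb \<times> CG" unfolding e1 by (rule bcd_dr_step_in[OF step])
  show "L (Z k) \<le> L (Z (k - 1))" unfolding e0 e1 by (rule bcd_dr_step_descent[OF step])
  show "dist (Z k) (Z (k - 1)) \<le> 4 * r k" unfolding e0 e1 by (rule bcd_dr_step_dist[OF step])
  fix Z' assume "Z' \<in> CW \<times> CH \<times> Cb \<times> CG"
  then show "- D (Z k) (Z' - Z k) \<le> norm (Z' - Z k) * ((L (Z (k - 1)) - L (Z k)) / r k + 16 * K * r k)"
    using bcd_dr_step_stationarity[OF step L cv] unfolding e0 e1 by (auto simp: dist_norm)
qed

lemma bcd_dr_iterates:
  fixes L :: "('a::euclidean_space \<times> 'b::euclidean_space \<times> 'c::euclidean_space \<times> 'd::euclidean_space) \<Rightarrow> real"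
  assumes L: "smooth_deriv_on K (CW \<times> CH \<times> Cb \<times> CG) L D"
    and cv: "convex CW" "convex CH" "convex Cb" "convex CG"
    and r_pos: "\<forall>t\<ge>1. r t > 0" and iter: "bcd_dr L CW CH Cb CG r Z"
  shows "Z k \<in> CW \<times> CH \<times> Cb \<times> CG"
    and "k \<ge> 1 \<Longrightarrow> dist (Z k) (Z (k - 1)) \<le> 4 * r k"
    and "k \<ge> 1 \<Longrightarrow>
      r k * stat_measure L (CW \<times> CH \<times> Cb \<times> CG) (Z k) \<le> L (Z (k - 1)) - L (Z k) + 16 * K * (r k)\<^sup>2"
proof -
  let ?\<Theta> = "CW \<times> CH \<times> Cb \<times> CG"
  note step = bcd_dr_step_at[OF L cv r_pos iter]
  show Zk: "Z k \<in> ?\<Theta>" for k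
  proof (induction k)
    case 0
    show ?case using iter unfolding bcd_dr_def by blast
  next
    case (Suc k)
    then show ?case using step(1)[of "Suc k"] by simp
  qed
  show "dist (Z k) (Z (k - 1)) \<le> 4 * r k" if "k \<ge> 1" for k by (rule step(3)[OF that Zk])
  fix k :: nat assume k: "k \<ge> 1"
  have rk: "r k > 0" using r_pos k by simp
  have "stat_measure L ?\<Theta> (Z k) \<le> (L (Z (k - 1)) - L (Z k)) / r k + 16 * K * r k"
  proof (rule stat_measure_le[OF Zk])
    show "0 \<le> (L (Z (k - 1)) - L (Z k)) / r k + 16 * K * r k"
      using step(2)[OF k Zk] rk smooth_deriv_on_nonneg[OF L] by simp
    show "- inner (grad L (Z k)) (Z' - Z k) \<le> norm (Z' - Z k) * ((L (Z (k - 1)) - L (Z k)) / r k + 16 * K * r k)"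
      if "Z' \<in> ?\<Theta>" for Z'
      using step(4)[OF k Zk that] has_derivative_eq_inner_grad[OF smooth_deriv_on_has_derivative[OF L Zk]]
      by simp
  qed
  then have "r k * stat_measure L ?\<Theta> (Z k) \<le> r k * ((L (Z (k - 1)) - L (Z k)) / r k + 16 * K * r k)"
    using rk by (simp add: mult_left_mono)
  also have "\<dots> = L (Z (k - 1)) - L (Z k) + 16 * K * (r k)\<^sup>2"
    using rk by (simp add: field_simps power2_eq_square)
  finally show "r k * stat_measure L ?\<Theta> (Z k) \<le> L (Z (k - 1)) - L (Z k) + 16 * K * (r k)\<^sup>2" .
qed

section \<open>Rates from the summed descent inequality\<close>

lemma weighted_sum_telescoping_bound:
  fixes r m F :: "nat \<Rightarrow> real"
  assumes step: "\<And>k. k \<ge> 1 \<Longrightarrow> r k * m k \<le> F (k - 1) - F k + c * (r k)\<^sup>2"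
    and F: "\<And>k. \<bar>F k\<bar> \<le> B" and c: "0 \<le> c" and r_sq: "summable (\<lambda>t. (r t)\<^sup>2)"
  shows "(\<Sum>k=1..T. r k * m k) \<le> 2 * B + c * (\<Sum>t. (r t)\<^sup>2)"
proof -
  have "(\<Sum>k=1..T. r k * m k) \<le> (\<Sum>k=1..T. (F (k - 1) - F k) + c * (r k)\<^sup>2)"
    by (rule sum_mono) (use step in force)
  also have "\<dots> = F 0 - F T + c * (\<Sum>k=1..T. (r k)\<^sup>2)"
  proof -
    have "(\<Sum>k=1..T. F (k - 1) - F k) = F 0 - F T" by (induction T) (auto simp: sum.cl_ivl_Suc)
    then show ?thesis by (simp add: sum.distrib sum_distrib_left)
  qed
  also have "\<dots> \<le> F 0 - F T + c * (\<Sum>t. (r t)\<^sup>2)"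
    using sum_le_suminf[OF r_sq, of "{1..T}"] c by (intro add_left_mono mult_left_mono) auto
  also have "\<dots> \<le> 2 * B + c * (\<Sum>t. (r t)\<^sup>2)" using F[of 0] F[of T] by (simp add: abs_le_iff)
  finally show ?thesis .
qed

lemma summableI_nonneg_bounded_from_1:
  fixes a :: "nat \<Rightarrow> real"
  assumes "\<And>k. k \<ge> 1 \<Longrightarrow> 0 \<le> a k" "\<And>T. (\<Sum>k=1..T. a k) \<le> C"
  shows "summable a"
proof -
  have "(\<Sum>i<n. a (Suc i)) = (\<Sum>k=1..n. a k)" for n
    by (induction n) simp_all
  then have "summable (\<lambda>i. a (Suc i))" using assms by (intro summableI_nonneg_bounded) auto
  then show ?thesis by (simp add: summable_Suc_iff)
qed

lemma Min_mult_sum_le_weighted_sum: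
  fixes r m :: "nat \<Rightarrow> real"
  assumes "T \<ge> 1" "\<forall>k\<ge>1. r k > 0"
  shows "Min (m ` {1..T}) * (\<Sum>k=1..T. r k) \<le> (\<Sum>k=1..T. r k * m k)"
proof -
  have "Min (m ` {1..T}) * (\<Sum>k=1..T. r k) = (\<Sum>k=1..T. r k * Min (m ` {1..T}))"
    by (simp only: mult.commute[of "Min _"] sum_distrib_right)
  also have "\<dots> \<le> (\<Sum>k=1..T. r k * m k)"
    using assms by (intro sum_mono mult_left_mono) auto
  finally show ?thesis .
qed

lemma Min_bigo_inverse_sum:
  fixes r m :: "nat \<Rightarrow> real"
  assumes bound: "\<And>T. T \<ge> 1 \<Longrightarrow> Min (m ` {1..T}) * (\<Sum>k=1..T. r k) \<le> C"
    and r_pos: "\<forall>k\<ge>1. r k > 0" and m_nonneg: "\<And>k. 0 \<le> m k"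
  shows "(\<lambda>T. Min (m ` {1..T})) \<in> O(\<lambda>T. 1 / (\<Sum>k=1..T. r k))"
proof (rule bigoI[where c = C])
  show "\<forall>\<^sub>F T in at_top. norm (Min (m ` {1..T})) \<le> C * norm (1 / (\<Sum>k=1..T. r k))"
    unfolding eventually_at_top_linorder
  proof (intro exI allI impI)
    fix T :: nat assume T: "T \<ge> 1"
    have S: "(\<Sum>k=1..T. r k) > 0" using r_pos T by (intro sum_pos) auto
    have "0 \<le> Min (m ` {1..T})" using T m_nonneg by (simp add: Min_ge_iff)
    moreover have "Min (m ` {1..T}) \<le> C / (\<Sum>k=1..T. r k)"
      using bound[OF T] S by (simp add: pos_le_divide_eq)
    ultimately show "norm (Min (m ` {1..T})) \<le> C * norm (1 / (\<Sum>k=1..T. r k))" using S by simp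
  qed
qed

lemma sum_inverse_sqrt_ln_lower:
  fixes r :: "nat \<Rightarrow> real"
  assumes r1: "r 1 > 0" and r: "\<forall>k\<ge>2. r k = 1 / (sqrt (real k) * ln (real k))" and T: "T \<ge> 2"
  shows "sqrt (real T) / (2 * ln (real T)) \<le> (\<Sum>k=1..T. r k)"
proof -
  have lnT: "ln (real T) > 0" and sT: "sqrt (real T) > 0" using T by simp_all
  have "(T - 1) * (1 / (sqrt (real T) * ln (real T))) = (\<Sum>k=2..T. 1 / (sqrt (real T) * ln (real T)))"
    using T by simp
  also have "\<dots> \<le> (\<Sum>k=2..T. r k)"
  proof (rule sum_mono)
    fix k assume k: "k \<in> {2..T}"
    then have "0 < sqrt (real k) * ln (real k)" "sqrt (real k) * ln (real k) \<le> sqrt (real T) * ln (real T)"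
      by (auto intro!: mult_mono)
    then show "1 / (sqrt (real T) * ln (real T)) \<le> r k" using r k by (simp add: frac_le)
  qed
  also have "\<dots> \<le> (\<Sum>k=1..T. r k)"
    using r1 sum.atLeast_Suc_atMost[of 1 T r] T by (simp add: numeral_2_eq_2)
  finally have "(real T - 1) / (sqrt (real T) * ln (real T)) \<le> (\<Sum>k=1..T. r k)"
    using T by (simp add: of_nat_diff)
  moreover have "sqrt (real T) / (2 * ln (real T)) \<le> (real T - 1) / (sqrt (real T) * ln (real T))"
  proof -
    have "sqrt (real T) / (2 * ln (real T)) = (real T / 2) / (sqrt (real T) * ln (real T))"
      using sT lnT by (simp add: field_simps flip: real_sqrt_mult)
    also have "\<dots> \<le> (real T - 1) / (sqrt (real T) * ln (real T))"
      using T sT lnT by (intro divide_right_mono) auto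
    finally show ?thesis .
  qed
  ultimately show ?thesis by linarith
qed

lemma sqrt_ln_threshold_bigo:
  fixes g :: "nat \<Rightarrow> real"
  assumes g: "\<And>T. T \<ge> 2 \<Longrightarrow> sqrt (real T) / (2 * ln (real T)) \<le> g T" and C: "C > 0"
  shows "(\<lambda>\<epsilon>. real (LEAST T. T \<ge> 1 \<and> C \<le> sqrt \<epsilon> * g T)) \<in> O[at_right 0](\<lambda>\<epsilon>. 1 / \<epsilon> * (ln (1 / \<epsilon>))\<^sup>2)"
proof (rule bigoI[where c = "2 * (4 * C + 1)\<^sup>2"])
  \<comment> \<open>For small \<open>\<epsilon>\<close>, the index \<open>T = \<lceil>A / \<epsilon> * (ln (1 / \<epsilon>))\<^sup>2\<rceil>\<close> is admissible.\<close>
  define A where "A = (4 * C + 1)\<^sup>2"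
  have A: "A > 0" "sqrt A = 4 * C + 1" unfolding A_def using C by auto
  define t where "t \<epsilon> = A / \<epsilon> * (ln (1 / \<epsilon>))\<^sup>2" for \<epsilon> :: real
  have "\<forall>\<^sub>F \<epsilon> in at_right 0. 0 < \<epsilon> \<and> 1 < 1 / \<epsilon> \<and> 2 \<le> t \<epsilon> \<and> ln 2 + ln A + 2 * ln (ln (1 / \<epsilon>)) \<le> ln (1 / \<epsilon>)"
    unfolding t_def using A(1) by (intro eventually_conj; real_asymp)
  then show "\<forall>\<^sub>F \<epsilon> in at_right 0. norm (real (LEAST T. T \<ge> 1 \<and> C \<le> sqrt \<epsilon> * g T))
      \<le> 2 * (4 * C + 1)\<^sup>2 * norm (1 / \<epsilon> * (ln (1 / \<epsilon>))\<^sup>2)"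
  proof eventually_elim
    case (elim \<epsilon>)
    then have \<epsilon>: "0 < \<epsilon>" "1 < 1 / \<epsilon>" "2 \<le> t \<epsilon>" and small: "ln 2 + ln A + 2 * ln (ln (1 / \<epsilon>)) \<le> ln (1 / \<epsilon>)"
      by auto
    define E where "E = 1 / \<epsilon>"
    define L where "L = ln E"
    have E: "E > 1" unfolding E_def using \<epsilon>(2) .
    have L: "L > 0" unfolding L_def using E by (rule ln_gt_zero)
    have tE: "t \<epsilon> = A * E * L\<^sup>2" unfolding t_def E_def L_def by simp
    define T where "T = nat \<lceil>t \<epsilon>\<rceil>"
    have T: "t \<epsilon> \<le> real T" "real T \<le> 2 * t \<epsilon>" "T \<ge> 2" unfolding T_def using \<epsilon>(3) by linarith+
    have "ln (real T) \<le> ln (2 * A * E * L\<^sup>2)" using T by (simp add: tE mult.assoc)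
    also have "\<dots> = ln 2 + ln A + L + 2 * ln L"
      using A(1) E L by (simp add: ln_mult ln_realpow L_def)
    also have "\<dots> \<le> 2 * L" using small unfolding L_def E_def by simp
    finally have lnT: "ln (real T) \<le> 2 * L" .
    have lnT_pos: "ln (real T) > 0" using T by simp
    have "(4 * C + 1) * L = sqrt (\<epsilon> * t \<epsilon>)"
      using A \<epsilon>(1) L by (simp add: tE E_def real_sqrt_mult)
    also have "\<dots> \<le> sqrt \<epsilon> * sqrt (real T)" using T \<epsilon>(1) by (simp add: real_sqrt_mult)
    moreover have "2 * C * ln (real T) \<le> 2 * C * (2 * L)" using lnT C by (intro mult_left_mono) auto
    moreover have "(4 * C + 1) * L = 4 * (C * L) + L" "2 * C * (2 * L) = 4 * (C * L)"
      by (simp_all add: algebra_simps)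
    ultimately have "2 * C * ln (real T) \<le> sqrt \<epsilon> * sqrt (real T)" using L by linarith
    then have "C \<le> sqrt \<epsilon> * (sqrt (real T) / (2 * ln (real T)))"
      using lnT_pos by (simp add: field_simps)
    also have "\<dots> \<le> sqrt \<epsilon> * g T" by (rule mult_left_mono[OF g[OF T(3)]]) (use \<epsilon>(1) in simp)
    finally have "(LEAST T. T \<ge> 1 \<and> C \<le> sqrt \<epsilon> * g T) \<le> T"
      using T(3) by (intro Least_le) simp
    then have "real (LEAST T. T \<ge> 1 \<and> C \<le> sqrt \<epsilon> * g T) \<le> 2 * t \<epsilon>" using T(2) by linarith
    then show ?case using \<epsilon>(1) by (simp add: tE E_def L_def A_def)
  qed
qed

lemma eps_stationary_iteration_bound:
  fixes r m :: "nat \<Rightarrow> real"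
  assumes bound: "\<And>T. T \<ge> 1 \<Longrightarrow> Min (m ` {1..T}) * (\<Sum>k=1..T. r k) \<le> C"
    and r_pos: "\<forall>k\<ge>1. r k > 0" and r_div: "filterlim (\<lambda>T. \<Sum>t=1..T. r t) at_top sequentially"
    and r_form: "\<forall>k\<ge>2. r k = 1 / (sqrt (real k) * ln (real k))"
  shows "\<exists>N :: real \<Rightarrow> nat. (\<lambda>\<epsilon>. real (N \<epsilon>)) \<in> O[at_right 0](\<lambda>\<epsilon>. (1 / \<epsilon>) * (ln (1 / \<epsilon>))\<^sup>2) \<and>
    (\<forall>\<epsilon>>0. \<exists>k\<in>{1..N \<epsilon>}. m k \<le> sqrt \<epsilon>)"
proof (intro exI conjI allI impI)
  define C' where "C' = max C 1"
  define S where "S T = (\<Sum>t=1..T. r t)" for T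
  define N where "N \<epsilon> = (LEAST T. T \<ge> 1 \<and> C' \<le> sqrt \<epsilon> * S T)" for \<epsilon>
  show "(\<lambda>\<epsilon>. real (N \<epsilon>)) \<in> O[at_right 0](\<lambda>\<epsilon>. (1 / \<epsilon>) * (ln (1 / \<epsilon>))\<^sup>2)"
    unfolding N_def using sum_inverse_sqrt_ln_lower[of r] r_pos r_form
    by (intro sqrt_ln_threshold_bigo) (auto simp: S_def C'_def)
  fix \<epsilon> :: real assume \<epsilon>: "\<epsilon> > 0"
  have "\<forall>\<^sub>F T in sequentially. C' / sqrt \<epsilon> < S T"
    using r_div unfolding filterlim_at_top_dense S_def by blast
  then obtain T0 where "\<And>T. T \<ge> T0 \<Longrightarrow> C' / sqrt \<epsilon> < S T" unfolding eventually_sequentially by blast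
  then have "max T0 1 \<ge> 1 \<and> C' \<le> sqrt \<epsilon> * S (max T0 1)"
    using \<epsilon> by (simp add: divide_less_eq mult.commute less_imp_le)
  then have NT: "N \<epsilon> \<ge> 1" "C' \<le> sqrt \<epsilon> * S (N \<epsilon>)"
    unfolding N_def by (metis (mono_tags, lifting) LeastI)+
  have S_pos: "S (N \<epsilon>) > 0" unfolding S_def using r_pos NT(1) by (intro sum_pos) auto
  have "Min (m ` {1..N \<epsilon>}) * S (N \<epsilon>) \<le> sqrt \<epsilon> * S (N \<epsilon>)"
    using bound[OF NT(1)] NT(2) unfolding S_def C'_def by linarith
  then have "Min (m ` {1..N \<epsilon>}) \<le> sqrt \<epsilon>" using S_pos by simp
  moreover have "Min (m ` {1..N \<epsilon>}) \<in> m ` {1..N \<epsilon>}" using NT(1) by (intro Min_in) auto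
  ultimately show "\<exists>k\<in>{1..N \<epsilon>}. m k \<le> sqrt \<epsilon>" by auto
qed

section \<open>Convergence to the stationary set\<close>

lemma dist_le_sum_steps:
  fixes Z :: "nat \<Rightarrow> 'a::real_normed_vector"
  assumes "a \<le> b"
  shows "dist (Z b) (Z a) \<le> (\<Sum>k\<in>{Suc a..b}. dist (Z k) (Z (k - 1)))"
proof -
  have "Z b - Z a = (\<Sum>k\<in>{Suc a..b}. Z k - Z (k - 1))" using sum_telescope''[OF assms, of Z] by simp
  then show ?thesis by (simp add: dist_norm norm_sum)
qed

lemma stat_measure_bounded_below_near_nonstationary:
  fixes L :: "'a::real_inner \<Rightarrow> real"
  assumes cont: "continuous_on \<Theta> (grad L)" and l: "l \<in> \<Theta>" "\<not> stationary_on L \<Theta> l"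
  obtains \<delta> c where "\<delta> > 0" "c > 0" "\<And>Z. Z \<in> \<Theta> \<Longrightarrow> norm (Z - l) < \<delta> \<Longrightarrow> c \<le> stat_measure L \<Theta> Z"
proof -
  obtain Z' where Z': "Z' \<in> \<Theta>" "inner (grad L l) (Z' - l) < 0"
    using l unfolding stationary_on_def by (auto simp: not_le)
  then have "Z' \<noteq> l" by auto
  define \<phi> where "\<phi> Z = inner (grad L Z) ((1 / norm (Z' - Z)) *\<^sub>R (Z' - Z))" for Z
  have \<phi>l: "\<phi> l < 0" unfolding \<phi>_def using Z' \<open>Z' \<noteq> l\<close> by (simp add: divide_neg_pos)
  have "(grad L \<longlongrightarrow> grad L l) (at l within \<Theta>)" using cont l(1) by (simp add: continuous_on_def)
  then have "(\<phi> \<longlongrightarrow> \<phi> l) (at l within \<Theta>)"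
    unfolding \<phi>_def using \<open>Z' \<noteq> l\<close> by (intro tendsto_intros) auto
  then have "\<forall>\<^sub>F Z in at l within \<Theta>. \<phi> Z < \<phi> l / 2" using \<phi>l by (intro order_tendstoD) auto
  then obtain \<delta> where \<delta>: "\<delta> > 0" "\<And>Z. Z \<in> \<Theta> \<Longrightarrow> Z \<noteq> l \<Longrightarrow> dist Z l < \<delta> \<Longrightarrow> \<phi> Z < \<phi> l / 2"
    unfolding eventually_at by blast
  show ?thesis
  proof (rule that[OF \<delta>(1)])
    show "- \<phi> l / 2 > 0" using \<phi>l by simp
    fix Z assume Z: "Z \<in> \<Theta>" "norm (Z - l) < \<delta>"
    have "\<phi> Z < \<phi> l / 2" using \<delta>(2)[OF Z(1)] Z(2) \<phi>l by (cases "Z = l") (auto simp: dist_norm)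
    then show "- \<phi> l / 2 \<le> stat_measure L \<Theta> Z" using stat_measure_ge[OF Z'(1), of L Z] unfolding \<phi>_def by linarith
  qed
qed

lemma trapped_in_ball:
  fixes Z :: "nat \<Rightarrow> 'a::real_normed_vector"
  assumes steps: "\<And>k. k > a \<Longrightarrow> dist (Z k) (Z (k - 1)) \<le> 4 * r k"
    and r_small: "\<And>k. k > a \<Longrightarrow> r k < \<delta> / 16"
    and run_short: "\<And>q. (\<And>k. a < k \<Longrightarrow> k < q \<Longrightarrow> norm (Z k - l) < \<delta>) \<Longrightarrow> (\<Sum>k\<in>{Suc a..<q}. r k) < \<delta> / 16"
    and start: "norm (Z a - l) < \<delta> / 2"
  shows "k \<ge> a \<Longrightarrow> norm (Z k - l) < \<delta>"
proof (induction k rule: less_induct)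
  case (less k)
  show ?case
  proof (cases "k = a")
    case True
    have "norm (Z a - l) < \<delta>" using start norm_ge_zero[of "Z a - l"] by linarith
    then show ?thesis using True by simp
  next
    case False
    then have ak: "a < k" using less.prems by simp
    have "dist (Z k) (Z a) \<le> (\<Sum>j\<in>{Suc a..k}. dist (Z j) (Z (j - 1)))"
      using ak by (intro dist_le_sum_steps) simp
    also have "\<dots> \<le> (\<Sum>j\<in>{Suc a..k}. 4 * r j)" using steps by (intro sum_mono) auto
    also have "\<dots> = 4 * (\<Sum>j\<in>{Suc a..<k}. r j) + 4 * r k"
      using ak by (simp add: sum_distrib_left atLeastLessThanSuc_atLeastAtMost[symmetric])
    also have "\<dots> < \<delta> / 2"
      using run_short[of k] less.IH r_small[OF ak] by fastforce
    finally show ?thesis using start norm_triangle_ineq[of "Z k - Z a" "Z a - l"] by (simp add: dist_norm)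
  qed
qed

lemma eventually_outside_ball:
  fixes Z :: "nat \<Rightarrow> 'a::real_normed_vector" and r m :: "nat \<Rightarrow> real"
  assumes summable: "summable (\<lambda>k. r k * m k)"
    and steps: "\<And>k. k \<ge> 1 \<Longrightarrow> dist (Z k) (Z (k - 1)) \<le> 4 * r k"
    and r_pos: "\<forall>k\<ge>1. r k > 0" and r0: "r \<longlonglongrightarrow> 0"
    and r_div: "filterlim (\<lambda>T. \<Sum>t=1..T. r t) at_top sequentially"
    and \<delta>: "\<delta> > 0" and c: "c > 0" and near: "\<And>k. norm (Z k - l) < \<delta> \<Longrightarrow> c \<le> m k"
  shows "\<forall>\<^sub>F k in sequentially. \<delta> / 2 \<le> norm (Z k - l)"
proof (rule ccontr)
  assume "\<not> ?thesis"
  then have often: "\<And>N. \<exists>a\<ge>N. norm (Z a - l) < \<delta> / 2"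
    unfolding eventually_sequentially by (auto simp: not_le)
  obtain N0 where N0: "\<And>p q. p \<ge> N0 \<Longrightarrow> norm (\<Sum>k\<in>{p..<q}. r k * m k) < c * \<delta> / 16"
    using summable c \<delta> unfolding summable_Cauchy by (meson divide_pos_pos mult_pos_pos zero_less_numeral)
  have "\<forall>\<^sub>F k in sequentially. r k < \<delta> / 16" using r0 \<delta> by (intro order_tendstoD) auto
  then obtain N1 where N1: "\<And>k. k \<ge> N1 \<Longrightarrow> r k < \<delta> / 16" unfolding eventually_sequentially by blast
  obtain a where a: "a \<ge> N0 + N1 + 1" "norm (Z a - l) < \<delta> / 2" using often by blast
  have run_short: "(\<Sum>k\<in>{Suc a..<q}. r k) < \<delta> / 16"
    if "\<And>k. a < k \<Longrightarrow> k < q \<Longrightarrow> norm (Z k - l) < \<delta>" for q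
  proof -
    have "c * (\<Sum>k\<in>{Suc a..<q}. r k) \<le> (\<Sum>k\<in>{Suc a..<q}. r k * m k)"
      unfolding sum_distrib_left using that r_pos near a(1)
      by (intro sum_mono) (simp add: mult.commute mult_left_mono)
    also have "\<dots> < c * \<delta> / 16" using N0[of "Suc a" q] a(1) by simp
    finally show ?thesis using c by simp
  qed
  have inside: "norm (Z k - l) < \<delta>" if "k \<ge> a" for k
    by (rule trapped_in_ball[where a = a and Z = Z and r = r and \<delta> = \<delta> and l = l,
          OF _ _ run_short a(2) that]) (use steps N1 a(1) in auto)
  have "\<forall>\<^sub>F n in sequentially. (\<Sum>t=1..a. r t) + \<delta> / 16 < (\<Sum>t=1..n. r t)"
    using r_div unfolding filterlim_at_top_dense by blast
  then obtain n where n: "n \<ge> a" "(\<Sum>t=1..a. r t) + \<delta> / 16 < (\<Sum>t=1..n. r t)"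
    unfolding eventually_sequentially by (meson nle_le order_trans)
  have "{1..n} = {1..a} \<union> {Suc a..<Suc n}" "{1..a} \<inter> {Suc a..<Suc n} = {}" using n(1) a(1) by auto
  then have "(\<Sum>t=1..n. r t) = (\<Sum>t=1..a. r t) + (\<Sum>t\<in>{Suc a..<Suc n}. r t)"
    by (simp add: sum.union_disjoint)
  moreover have "(\<Sum>t\<in>{Suc a..<Suc n}. r t) < \<delta> / 16" by (rule run_short) (use inside in auto)
  ultimately show False using n(2) by linarith
qed

lemma infdist_stationary_tendsto_zero:
  fixes Z :: "nat \<Rightarrow> 'a::real_inner" and L :: "'a \<Rightarrow> real" and r :: "nat \<Rightarrow> real"
  assumes \<Theta>: "compact \<Theta>" and Z: "\<And>k. Z k \<in> \<Theta>" and cont: "continuous_on \<Theta> (grad L)"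
    and summable: "summable (\<lambda>k. r k * stat_measure L \<Theta> (Z k))"
    and steps: "\<And>k. k \<ge> 1 \<Longrightarrow> dist (Z k) (Z (k - 1)) \<le> 4 * r k"
    and r_pos: "\<forall>k\<ge>1. r k > 0" and r0: "r \<longlonglongrightarrow> 0"
    and r_div: "filterlim (\<lambda>T. \<Sum>t=1..T. r t) at_top sequentially"
  shows "(\<lambda>t. infdist (Z t) {Z'. stationary_on L \<Theta> Z'}) \<longlonglongrightarrow> 0"
proof (rule ccontr)
  let ?S = "{Z'. stationary_on L \<Theta> Z'}"
  assume "\<not> ?thesis"
  then obtain \<epsilon> where \<epsilon>: "\<epsilon> > 0" "\<not> (\<forall>\<^sub>F t in sequentially. dist (infdist (Z t) ?S) 0 < \<epsilon>)"
    unfolding tendsto_iff by blast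
  then obtain \<sigma> :: "nat \<Rightarrow> nat" where \<sigma>: "strict_mono \<sigma>" "\<And>n. \<epsilon> \<le> infdist (Z (\<sigma> n)) ?S"
    using not_eventually_sequentiallyD[OF \<epsilon>(2)] by (auto simp: infdist_nonneg not_less)
  obtain l \<rho> where l: "l \<in> \<Theta>" "strict_mono \<rho>" "(Z \<circ> \<sigma> \<circ> \<rho>) \<longlonglongrightarrow> l"
    using compact_imp_seq_compact[OF \<Theta>] Z by (metis comp_apply seq_compactE)
  have "(\<lambda>n. infdist ((Z \<circ> \<sigma> \<circ> \<rho>) n) ?S) \<longlonglongrightarrow> infdist l ?S" by (rule tendsto_infdist[OF l(3)])
  then have "\<epsilon> \<le> infdist l ?S" by (rule LIMSEQ_le_const) (use \<sigma>(2) in auto)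
  then have "\<not> stationary_on L \<Theta> l" using \<epsilon>(1) by auto
  then obtain \<delta> c where \<delta>: "\<delta> > 0" "c > 0"
    and near: "\<And>Z'. Z' \<in> \<Theta> \<Longrightarrow> norm (Z' - l) < \<delta> \<Longrightarrow> c \<le> stat_measure L \<Theta> Z'"
    using stat_measure_bounded_below_near_nonstationary[OF cont l(1)] by blast
  have "\<forall>\<^sub>F k in sequentially. \<delta> / 2 \<le> norm (Z k - l)"
    using eventually_outside_ball[OF summable steps r_pos r0 r_div \<delta>] near Z by blast
  then have "\<forall>\<^sub>F n in sequentially. \<delta> / 2 \<le> norm ((Z \<circ> \<sigma> \<circ> \<rho>) n - l)"
    using eventually_compose_filterlim filterlim_subseq[OF strict_mono_o[OF \<sigma>(1) l(2)]] by fastforce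
  moreover have "\<forall>\<^sub>F n in sequentially. dist ((Z \<circ> \<sigma> \<circ> \<rho>) n) l < \<delta> / 2"
    using tendstoD[OF l(3), of "\<delta> / 2"] \<delta>(1) by simp
  ultimately have "\<forall>\<^sub>F n in sequentially. False" by eventually_elim (simp add: dist_norm)
  then show False by simp
qed

section \<open>Convergence of BCD-DR for smooth losses\<close>

theorem bcd_dr_convergence:
  fixes L :: "('a::euclidean_space \<times> 'b::euclidean_space \<times> 'c::euclidean_space \<times> 'd::euclidean_space) \<Rightarrow> real"
  assumes smooth: "smooth_on (CW \<times> CH \<times> Cb \<times> CG) L"
    and conv: "convex CW" "convex CH" "convex Cb" "convex CG"
    and comp: "compact CW" "compact CH" "compact Cb" "compact CG"
    and r_pos: "\<forall>t\<ge>1. r t > 0"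
    and r_div: "filterlim (\<lambda>T. \<Sum>t=1..T. r t) at_top sequentially"
    and r_sq: "summable (\<lambda>t. (r t)\<^sup>2)"
    and iter: "bcd_dr L CW CH Cb CG r Z"
  shows
    "(\<lambda>t. infdist (Z t) {Z'. stationary_on L (CW \<times> CH \<times> Cb \<times> CG) Z'}) \<longlonglongrightarrow> 0
     \<and> (\<lambda>T. Min ((\<lambda>k. stat_measure L (CW \<times> CH \<times> Cb \<times> CG) (Z k)) ` {1..T}))
        \<in> O(\<lambda>T. 1 / (\<Sum>k=1..T. r k))
     \<and> ((\<forall>k\<ge>2. r k = 1 / (sqrt (real k) * ln (real k))) \<longrightarrow>
        (\<exists>N :: real \<Rightarrow> nat.
           (\<lambda>\<epsilon>. real (N \<epsilon>)) \<in> O[at_right 0](\<lambda>\<epsilon>. (1 / \<epsilon>) * (ln (1 / \<epsilon>))\<^sup>2) \<and>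
           (\<forall>\<epsilon>>0. \<exists>k\<in>{1..N \<epsilon>}. eps_stationary L (CW \<times> CH \<times> Cb \<times> CG) \<epsilon> (Z k))))"
proof -
  let ?\<Theta> = "CW \<times> CH \<times> Cb \<times> CG"
  obtain K D where L: "smooth_deriv_on K ?\<Theta> L D" using smooth unfolding smooth_on_def by blast
  note iterates = bcd_dr_iterates[OF L conv r_pos iter]
  define m where "m k = stat_measure L ?\<Theta> (Z k)" for k
  have m_nonneg: "0 \<le> m k" for k unfolding m_def using iterates(1) by (rule stat_measure_nonneg)
  define C where "C = 2 * K + 16 * K * (\<Sum>t. (r t)\<^sup>2)"
  have weighted: "(\<Sum>k=1..T. r k * m k) \<le> C" for T
    unfolding C_def m_def using smooth_deriv_on_bound[OF L iterates(1)] smooth_deriv_on_nonneg[OF L]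
    by (intro weighted_sum_telescoping_bound[OF iterates(3) _ _ r_sq]) auto
  have Min_bound: "Min (m ` {1..T}) * (\<Sum>k=1..T. r k) \<le> C" if "T \<ge> 1" for T
    using Min_mult_sum_le_weighted_sum[OF that r_pos, of m] weighted[of T] by linarith
  have "summable (\<lambda>k. r k * m k)"
    using weighted r_pos m_nonneg by (intro summableI_nonneg_bounded_from_1) auto
  moreover have "r \<longlonglongrightarrow> 0"
    using tendsto_real_sqrt[OF summable_LIMSEQ_zero[OF r_sq]] by (simp add: tendsto_rabs_zero_iff)
  ultimately have "(\<lambda>t. infdist (Z t) {Z'. stationary_on L ?\<Theta> Z'}) \<longlonglongrightarrow> 0"
    using comp conv by (intro infdist_stationary_tendsto_zero[OF _ iterates(1) _ _ iterates(2) r_pos _ r_div]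
        lipschitz_on_continuous_on[OF lipschitz_on_grad[OF L]] compact_Times) (auto simp: m_def)
  moreover have "(\<lambda>T. Min (m ` {1..T})) \<in> O(\<lambda>T. 1 / (\<Sum>k=1..T. r k))"
    using Min_bound r_pos m_nonneg by (rule Min_bigo_inverse_sum)
  moreover have "(\<exists>N :: real \<Rightarrow> nat. (\<lambda>\<epsilon>. real (N \<epsilon>)) \<in> O[at_right 0](\<lambda>\<epsilon>. (1 / \<epsilon>) * (ln (1 / \<epsilon>))\<^sup>2) \<and>
      (\<forall>\<epsilon>>0. \<exists>k\<in>{1..N \<epsilon>}. eps_stationary L ?\<Theta> \<epsilon> (Z k)))"
    if "\<forall>k\<ge>2. r k = 1 / (sqrt (real k) * ln (real k))"
    using eps_stationary_iteration_bound[OF Min_bound r_pos r_div that] iterates(1)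
    unfolding eps_stationary_def m_def by blast
  ultimately show ?thesis unfolding m_def by blast
qed

section \<open>Smoothness of the SDL loss\<close>

lemma bounded_linear_transpose: "bounded_linear (transpose :: real^'n^'m \<Rightarrow> real^'m^'n)"
  unfolding linear_conv_bounded_linear[symmetric]
  by (rule linearI) (simp_all add: vec_eq_iff transpose_def)

lemma bounded_linear_column: "bounded_linear (column i :: real^'n^'m \<Rightarrow> real^'m)"
  unfolding linear_conv_bounded_linear[symmetric]
  by (rule linearI) (simp_all add: vec_eq_iff column_def)

lemma bounded_bilinear_matrix_vector_mult: "bounded_bilinear (\<lambda>(A::real^'n^'m) (x::real^'n). A *v x)"
  unfolding bilinear_conv_bounded_bilinear[symmetric] bilinear_def
  by (auto intro!: linearI simp: vec_eq_iff matrix_vector_mult_def sum.distrib sum_distrib_left algebra_simps)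

lemma bounded_bilinear_matrix_matrix_mult: "bounded_bilinear (\<lambda>(A::real^'n^'m) (B::real^'k^'n). A ** B)"
  unfolding bilinear_conv_bounded_bilinear[symmetric] bilinear_def
  by (auto intro!: linearI simp: vec_eq_iff matrix_matrix_mult_def sum.distrib sum_distrib_left algebra_simps)

lemma sdl_ell_eq_ln:
  assumes h_pos: "\<forall>x. h x > 0"
  shows "sdl_ell h y a = ln (1 + (\<Sum>c\<in>UNIV. h (a $ c))) - (case y of None \<Rightarrow> 0 | Some j \<Rightarrow> ln (h (a $ j)))"
proof -
  have pos: "1 + (\<Sum>c\<in>UNIV. h (a $ c)) > 0" using h_pos by (simp add: add_pos_nonneg sum_nonneg less_imp_le)
  have "(\<Sum>j\<in>UNIV. (if y = j then 1 else 0) * ln (sdl_g h a j)) = (\<Sum>j\<in>{y}. ln (sdl_g h a j))"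
    by (rule sum.mono_neutral_cong_right) auto
  then have "sdl_ell h y a = - ln (sdl_g h a y)" unfolding sdl_ell_def by simp
  moreover have "h x \<noteq> 0" for x using h_pos by (metis less_irrefl)
  ultimately show ?thesis using pos h_pos by (cases y) (simp_all add: sdl_g_def ln_div)
qed

lemma smooth_on_sdl_act:
  fixes S :: "('p::finite, 'q::finite, 'r::finite, 'n::finite, 'k::finite) sdl_param set"
  assumes S: "bounded S"
  shows "smooth_on S (\<lambda>Z. sdl_act kind Xd Xa Z i)"
proof -
  note mv = smooth_on_bilinear[OF bounded_bilinear_matrix_vector_mult]
  note lin = smooth_on_linear[OF bounded_linear_compose[OF bounded_linear_transpose] S]
  have W: "smooth_on S (\<lambda>Z. transpose (fst Z))" by (rule lin bounded_linear_fst)+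
  have H: "smooth_on S (\<lambda>Z. column i (fst (snd Z)))"
    by (intro smooth_on_linear[OF _ S] bounded_linear_compose[OF bounded_linear_column]
        bounded_linear_compose[OF bounded_linear_fst] bounded_linear_snd)
  have \<beta>: "smooth_on S (\<lambda>Z. transpose (fst (snd (snd Z))))"
    by (intro lin bounded_linear_compose[OF bounded_linear_fst] bounded_linear_compose[OF bounded_linear_snd]
        bounded_linear_snd)
  have \<Gamma>: "smooth_on S (\<lambda>Z. transpose (snd (snd (snd Z))))"
    by (intro lin bounded_linear_compose[OF bounded_linear_snd] bounded_linear_snd)
  have act: "sdl_act kind Xd Xa Z i = (case kind of
      FilterBased \<Rightarrow> transpose (fst (snd (snd Z))) *v (transpose (fst Z) *v column i Xd)
    | FeatureBased \<Rightarrow> transpose (fst (snd (snd Z))) *v column i (fst (snd Z)))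
    + transpose (snd (snd (snd Z))) *v column i Xa" for Z
    by (simp add: sdl_act_def prod.case_eq_if)
  have aux: "smooth_on S (\<lambda>Z. transpose (snd (snd (snd Z))) *v column i Xa)"
    by (rule mv[OF \<Gamma> smooth_on_const])
  show ?thesis
  proof (cases kind)
    case FilterBased
    then show ?thesis unfolding act using smooth_on_add[OF mv[OF \<beta> mv[OF W smooth_on_const]] aux] by simp
  next
    case FeatureBased
    then show ?thesis unfolding act using smooth_on_add[OF mv[OF \<beta> H] aux] by simp
  qed
qed

lemma smooth_on_sdl_ell:
  fixes A :: "'a::real_normed_vector \<Rightarrow> real^'k::finite"
  assumes h_pos: "\<forall>x. h x > 0"
    and h': "\<And>x. (h has_real_derivative h' x) (at x)"
    and h'': "\<And>x. (h' has_real_derivative h'' x) (at x)" "continuous_on UNIV h''"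
    and A: "smooth_on S A"
  shows "smooth_on S (\<lambda>Z. sdl_ell h y (A Z))"
proof -
  obtain B where B: "\<And>Z. Z \<in> S \<Longrightarrow> norm (A Z) \<le> B"
    using smooth_on_bounded[OF A] unfolding bounded_iff by blast
  have range: "A Z $ c \<in> {-B..B}" if "Z \<in> S" for Z c
    using component_le_norm_cart[of "A Z" c] B[OF that] by (auto simp: abs_le_iff)
  have comp: "smooth_on S (\<lambda>Z. A Z $ c)" for c by (rule smooth_on_linear_compose[OF bounded_linear_vec_nth A])
  have cont: "continuous_on U h" "continuous_on U h'" "continuous_on U h''" for U
    using h' h'' by (auto intro: DERIV_isCont continuous_at_imp_continuous_on continuous_on_subset)
  have "smooth_on S (\<lambda>Z. h (A Z $ c))" for c
    using smooth_on_interval_C2[of "-B" B h h' h''] h' h'' cont range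
    by (intro smooth_on_compose[OF _ comp]) auto
  then have sum: "smooth_on S (\<lambda>Z. 1 + (\<Sum>c\<in>UNIV. h (A Z $ c)))"
    by (intro smooth_on_add smooth_on_const smooth_on_sum) auto
  obtain B' where B': "\<And>Z. Z \<in> S \<Longrightarrow> norm (1 + (\<Sum>c\<in>UNIV. h (A Z $ c))) \<le> B'"
    using smooth_on_bounded[OF sum] unfolding bounded_iff by blast
  have "smooth_on {1..B'} ln"
  proof (rule smooth_on_interval_C2)
    show "(ln has_real_derivative inverse t) (at t)" if "t \<in> {1..B'}" for t
      using that by (auto intro!: DERIV_ln)
    show "(inverse has_real_derivative - (inverse t ^ Suc (Suc 0))) (at t)" if "t \<in> {1..B'}" for t
      using DERIV_inverse[of t] that by simp
    show "continuous_on {1..B'} (\<lambda>t. - (inverse t ^ Suc (Suc 0)))" by (intro continuous_intros) auto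
  qed
  moreover have "1 \<le> 1 + (\<Sum>c\<in>UNIV. h (A Z $ c))" for Z using h_pos by (simp add: sum_nonneg less_imp_le)
  ultimately have ln_sum: "smooth_on S (\<lambda>Z. ln (1 + (\<Sum>c\<in>UNIV. h (A Z $ c))))"
    using B' by (intro smooth_on_compose[OF _ sum]) auto
  have "((\<lambda>t. ln (h t)) has_real_derivative h' t / h t) (at t)" for t
    using h_pos h' by (auto intro!: derivative_eq_intros simp: field_simps)
  moreover have "((\<lambda>t. h' t / h t) has_real_derivative (h'' t * h t - h' t * h' t) / (h t)\<^sup>2) (at t)" for t
    using DERIV_divide[OF h''(1) h', of t] h_pos by (simp add: power2_eq_square less_imp_neq[symmetric])
  moreover have "continuous_on U (\<lambda>t. (h'' t * h t - h' t * h' t) / (h t)\<^sup>2)" for U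
    using cont h_pos by (intro continuous_intros) (auto simp: less_imp_neq[symmetric])
  ultimately have "smooth_on {-B..B} (\<lambda>t. ln (h t))" by (intro smooth_on_interval_C2)
  then have "smooth_on S (\<lambda>Z. ln (h (A Z $ j)))" for j
    using range by (intro smooth_on_compose[OF _ comp]) auto
  then have "smooth_on S (\<lambda>Z. case y of None \<Rightarrow> 0 | Some j \<Rightarrow> ln (h (A Z $ j)))"
    by (cases y) (simp_all add: smooth_on_const)
  with ln_sum show ?thesis by (simp add: sdl_ell_eq_ln[OF h_pos] smooth_on_diff)
qed

lemma smooth_on_sdl_loss:
  fixes S :: "('p::finite, 'q::finite, 'r::finite, 'n::finite, 'k::finite) sdl_param set"
  assumes h_pos: "\<forall>x. h x > 0"
    and h': "\<And>x. (h has_real_derivative h' x) (at x)"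
    and h'': "\<And>x. (h' has_real_derivative h'' x) (at x)" "continuous_on UNIV h''"
    and S: "bounded S"
  shows "smooth_on S (sdl_loss h kind Xd Xa y \<xi>)"
proof -
  have "smooth_on S (\<lambda>Z. \<Sum>i\<in>UNIV. sdl_ell h (y i) (sdl_act kind Xd Xa Z i))"
    by (intro smooth_on_sum smooth_on_sdl_ell[OF h_pos h' h''] smooth_on_sdl_act[OF S]) auto
  moreover have "smooth_on S (\<lambda>Z. Xd - fst Z ** fst (snd Z))"
    by (intro smooth_on_diff smooth_on_const smooth_on_bilinear[OF bounded_bilinear_matrix_matrix_mult]
        smooth_on_linear[OF _ S] bounded_linear_fst bounded_linear_compose[OF bounded_linear_fst bounded_linear_snd])
  then have "smooth_on S (\<lambda>Z. \<xi> * inner (Xd - fst Z ** fst (snd Z)) (Xd - fst Z ** fst (snd Z)))"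
    by (intro smooth_on_mult smooth_on_const smooth_on_bilinear[OF bounded_bilinear_inner])
  ultimately show ?thesis
    unfolding sdl_loss_def power2_norm_eq_inner by (rule smooth_on_add)
qed

theorem mainTheorem4:
  fixes h h' h'' :: "real \<Rightarrow> real"
    and kind :: sdl_kind
    and Xd :: "real^'n::finite^'p::finite" and Xa :: "real^'n^'q::finite"
    and y :: "'n \<Rightarrow> 'k::finite option"
    and CW :: "(real^'r::finite^'p) set" and CH :: "(real^'n^'r) set"
    and Cb :: "(real^'k^'r) set" and CG :: "(real^'k^'q) set"
    and r :: "nat \<Rightarrow> real" and \<xi> :: real
    and Z :: "nat \<Rightarrow> ('p,'q,'r,'n,'k) sdl_param"
  assumes h_pos: "\<forall>x. h x > 0"
    and A4: "assm_A4 h h' h'' y"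
    and conv: "convex CW" "convex CH" "convex Cb" "convex CG"
    and comp: "compact CW" "compact CH" "compact Cb" "compact CG"
    and r_pos: "\<forall>t\<ge>1. r t > 0"
    and r_div: "filterlim (\<lambda>T. \<Sum>t=1..T. r t) at_top sequentially"
    and r_sq: "summable (\<lambda>t. (r t)\<^sup>2)"
    and xi: "\<xi> \<ge> 0"
    and iter: "bcd_dr (sdl_loss h kind Xd Xa y \<xi>) CW CH Cb CG r Z"
  shows
    "(\<lambda>t. infdist (Z t) {Z'. stationary_on (sdl_loss h kind Xd Xa y \<xi>) (CW \<times> CH \<times> Cb \<times> CG) Z'})
        \<longlonglongrightarrow> 0
     \<and> (\<lambda>T. Min ((\<lambda>k. stat_measure (sdl_loss h kind Xd Xa y \<xi>) (CW \<times> CH \<times> Cb \<times> CG) (Z k)) ` {1..T}))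
        \<in> O(\<lambda>T. 1 / (\<Sum>k=1..T. r k))
     \<and> ((\<forall>k\<ge>2. r k = 1 / (sqrt (real k) * ln (real k))) \<longrightarrow>
        (\<exists>N :: real \<Rightarrow> nat.
           (\<lambda>\<epsilon>. real (N \<epsilon>)) \<in> O[at_right 0](\<lambda>\<epsilon>. (1 / \<epsilon>) * (ln (1 / \<epsilon>))\<^sup>2) \<and>
           (\<forall>\<epsilon>>0. \<exists>k\<in>{1..N \<epsilon>}.
              eps_stationary (sdl_loss h kind Xd Xa y \<xi>) (CW \<times> CH \<times> Cb \<times> CG) \<epsilon> (Z k))))"
proof -
  have h: "\<And>x. (h has_real_derivative h' x) (at x)" "\<And>x. (h' has_real_derivative h'' x) (at x)"
    "continuous_on UNIV h''"
    using A4 unfolding assm_A4_def by blast+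
  have "bounded (CW \<times> CH \<times> Cb \<times> CG)" using comp by (intro compact_imp_bounded compact_Times)
  then have "smooth_on (CW \<times> CH \<times> Cb \<times> CG) (sdl_loss h kind Xd Xa y \<xi>)"
    by (rule smooth_on_sdl_loss[OF h_pos h])
  then show ?thesis by (rule bcd_dr_convergence[OF _ conv comp r_pos r_div r_sq iter])
qed

end
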